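(* Consider the BC-phase training model described in the context, with relay training length $L_R$ and total MSE $e_1(\mathbf S_R)+e_2(\mathbf S_R)$. (i) If $L_R\ge M$, then for every $\varepsilon>0$ there exists $\mathbf S_R\in\mathbb C^{M\times L_R}$ (with no bound on $\mathrm{Tr}(\mathbf S_R\mathbf S_R^H)$) such that $e_1(\mathbf S_R)+e_2(\mathbf S_R)<\varepsilon$; i.e. an arbitrarily small MSE can be achieved with sufficiently large relay power when $L_R=M$. (ii) If $L_R<M$, then for every $\mathbf S_R\in\mathbb C^{M\times L_R}$ (even with infinite relay power) $$e_1(\mathbf S_R)+e_2(\mathbf S_R)\ge\sum_{m=L_R+1}^{M}\sigma_{t,G,m}\Big(\sum_{n=1}^{N_1}\sigma_{r,G_1,n}+\sum_{n=1}^{N_2}\sigma_{r,G_2,n}\Big),$$ where $\sigma_{t,G,1}\ge\dots\ge\sigma_{t,G,M}$ are the eigenvalues of $\mathbf Z_{t,G}$ in decreasing order and $\sigma_{r,G_i,n}$ are the eigenvalues of $\mathbf Z_{r,G_i}$. (iii) Suppose $\mathbf K_{q,i}=q_i\mathbf I_{L_R}$ with $q_i>0$ for $i=1,2$, let $\tau_R>0$, and let $\mathbf S_R^{\rm opt}$ be an optimal solution of $\min_{\mathbf S_R} e_1(\mathbf S_R)+e_2(\mathbf S_R)$ subject to $\mathrm{Tr}(\mathbf S_R\mathbf S_R^H)\le\tau_R$, with $\mathrm{Rank}(\mathbf S_R^{\rm opt})=r$. Then there exists $\tilde{\mathbf S}_R\in\mathbb C^{M\times r}$ with $\mathrm{Tr}(\tilde{\mathbf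 S}_R\tilde{\mathbf S}_R^H)=\mathrm{Tr}(\mathbf S_R^{\rm opt}\mathbf S_R^{{\rm opt}H})$ whose total MSE in the same model with training length $r$ (temporal disturbance covariances $q_i\mathbf I_r$) equals that of $\mathbf S_R^{\rm opt}$; i.e. the training length can be reduced to $L_R=r$.
   Context: BC phase of a MIMO two-way relay system: relay with $M$ antennas broadcasts training $\mathbf S_R\in\mathbb C^{M\times L_R}$ to sources with $N_1,N_2$ antennas. Let $\mathbf Z_{t,G}\in\mathbb C^{M\times M}$ and $\mathbf Z_{r,G_i}\in\mathbb C^{N_i\times N_i}$ be Hermitian positive definite with $\mathbf Z_{t,G}=\mathbf C_{t,G}\mathbf C_{t,G}^H$, $\mathbf Z_{r,G_i}=\mathbf C_{r,G_i}\mathbf C_{r,G_i}^H$ (square invertible factors). Channels $\mathbf G_i=\mathbf C_{r,G_i}\mathbf W_{G_i}\mathbf C_{t,G}^T\in\mathbb C^{N_i\times M}$ with $\mathbf W_{G_i}$ having i.i.d. $\mathcal{CN}(0,1)$ entries. Source $i$ receives $\mathbf Y_i=\mathbf G_i\mathbf S_R+\mathbf N_i$, $\mathrm{vec}(\mathbf N_i)\sim\mathcal{CN}(\mathbf 0,\mathbf K_i)$, $\mathbf K_i=\mathbf K_{q,i}\otimes\mathbf K_{r,i}$ with $\mathbf K_{q,i}\in\mathbb C^{L_R\times L_R}$, $\mathbf K_{r,i}\in\mathbb C^{N_i\times N_i}$ Hermitian positive definite, $\mathbf K_{r,i}$ sharing eigenvectors with $\mathbf Z_{r,G_i}$. The LMMSE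 estimation error of $\mathrm{vec}(\mathbf G_i)$ is $e_i(\mathbf S_R)=\mathrm{Tr}\big[\mathbf C_{0,G_i}(\mathbf I+\mathbf F_i^H\mathbf K_i^{-1}\mathbf F_i)^{-1}\big]$, $\mathbf F_i=\mathbf S_R^T\mathbf C_{t,G}\otimes\mathbf C_{r,G_i}$, $\mathbf C_{0,G_i}=\mathbf C_{t,G}^H\mathbf C_{t,G}\otimes\mathbf C_{r,G_i}^H\mathbf C_{r,G_i}$. *)

theory Defs
  imports "Jordan_Normal_Form.Gauss_Jordan_Elimination" "Jordan_Normal_Form.Schur_Decomposition"
          "Jordan_Normal_Form.Char_Poly" "Jordan_Normal_Form.DL_Rank"
begin

definition mtrace :: "'a :: comm_monoid_add mat \<Rightarrow> 'a" where
  "mtrace A = (\<Sum>i<dim_row A. A $$ (i,i))"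

definition kron :: "'a :: times mat \<Rightarrow> 'a mat \<Rightarrow> 'a mat" where
  "kron A B = mat (dim_row A * dim_row B) (dim_col A * dim_col B)
     (\<lambda>(i,j). A $$ (i div dim_row B, j div dim_col B) * B $$ (i mod dim_row B, j mod dim_col B))"

text \<open>Matrix inverse (only used on invertible square matrices).\<close>
definition minv :: "'a :: field mat \<Rightarrow> 'a mat" where
  "minv A = (case mat_inverse A of Some B \<Rightarrow> B | None \<Rightarrow> 0\<^sub>m (dim_row A) (dim_row A))"

definition hermitian :: "nat \<Rightarrow> complex mat \<Rightarrow> bool" where
  "hermitian n A \<longleftrightarrow> A \<in> carrier_mat n n \<and> mat_adjoint A = A"

definition hpd :: "nat \<Rightarrow> complex mat \<Rightarrow> bool" where
  "hpd n A \<longleftrightarrow> hermitian n A \<and>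
     (\<forall>v \<in> carrier_vec n. v \<noteq> 0\<^sub>v n \<longrightarrow> Re ((A *\<^sub>v v) \<bullet>c v) > 0)"

definition unitary :: "nat \<Rightarrow> complex mat \<Rightarrow> bool" where
  "unitary n U \<longleftrightarrow> U \<in> carrier_mat n n \<and> mat_adjoint U * U = 1\<^sub>m n"

definition share_eigvecs :: "nat \<Rightarrow> complex mat \<Rightarrow> complex mat \<Rightarrow> bool" where
  "share_eigvecs n A B \<longleftrightarrow> (\<exists>U. unitary n U \<and> diagonal_mat (mat_adjoint U * A * U)
                                 \<and> diagonal_mat (mat_adjoint U * B * U))"

text \<open>sigma (indexed 0..n-1) lists the eigenvalues (with multiplicity) of the n x n matrix A.\<close>
definition eigenvalue_list :: "nat \<Rightarrow> complex mat \<Rightarrow> (nat \<Rightarrow> real) \<Rightarrow> bool" where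
  "eigenvalue_list n A \<sigma> \<longleftrightarrow> char_poly A = (\<Prod>k<n. [: - complex_of_real (\<sigma> k), 1 :])"

text \<open>LMMSE error e_i(S_R) = Tr[C_0 (I + F^H K^{-1} F)^{-1}] with
  F = S^T C_t (x) C_r, K = K_q (x) K_r, C_0 = C_t^H C_t (x) C_r^H C_r.
  The trace is real; we take its real part.\<close>
definition lmmse_err :: "complex mat \<Rightarrow> complex mat \<Rightarrow> complex mat \<Rightarrow> complex mat \<Rightarrow> complex mat \<Rightarrow> real" where
  "lmmse_err S Ct Cr Kq Kr =
     (let F = kron (transpose_mat S * Ct) Cr;
          K = kron Kq Kr;
          C0 = kron (mat_adjoint Ct * Ct) (mat_adjoint Cr * Cr)
      in Re (mtrace (C0 * minv (1\<^sub>m (dim_col F) + mat_adjoint F * minv K * F))))"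

end

theory Submission
  imports Defs
begin

text \<open>The error is Re tr[C0 (I + X)^-1] with information matrix X = F^H K^-1 F, F = (S^T Ct) \<otimes> Cr.
  If L \<ge> M, training with a multiple of [I; 0] Ct^-1 makes X = c^2 Y for a fixed positive definite Y,
  so the error is O(1/c^2). If L < M, X vanishes on V \<otimes> I for an orthonormal basis V of the kernel
  of S^T Ct, which forces (I + X)^-1 to dominate the projection onto that subspace; Ky Fan's minimum
  principle then bounds the error below by the M - L smallest eigenvalues of Zt times tr Zr_i.
  For white temporal noise, compressing S onto an orthonormal basis of its row space changes neither
  the energy nor the error.\<close>

section \<open>Adjoints, traces and inverses\<close>

lemma mat_adjoint_eq_mat: "mat_adjoint (A::complex mat) = mat (dim_col A) (dim_row A) (\<lambda>(i,j). cnj (A $$ (j,i)))"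
  unfolding mat_adjoint_def mat_of_rows_def
  by (rule eq_matI, simp_all add: cols_def)

lemma dim_mat_adjoint[simp]: "dim_row (mat_adjoint (A::complex mat)) = dim_col A"
  "dim_col (mat_adjoint A) = dim_row A"
  by (simp_all add: mat_adjoint_eq_mat)

lemma index_mat_adjoint[simp]: "i < dim_col A \<Longrightarrow> j < dim_row A \<Longrightarrow> mat_adjoint (A::complex mat) $$ (i,j) = cnj (A $$ (j,i))"
  by (simp add: mat_adjoint_eq_mat)

lemma mat_adjoint_carrier[simp,intro]: "A \<in> carrier_mat n m \<Longrightarrow> mat_adjoint (A::complex mat) \<in> carrier_mat m n"
  by (intro carrier_matI, auto)

lemma mat_adjoint_adjoint[simp]: "mat_adjoint (mat_adjoint (A::complex mat)) = A"
  by (rule eq_matI, simp_all)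

lemma mat_adjoint_mult: assumes "(A::complex mat) \<in> carrier_mat n m" "B \<in> carrier_mat m k"
  shows "mat_adjoint (A * B) = mat_adjoint B * mat_adjoint A"
proof (rule eq_matI)
  fix i j assume ij: "i < dim_row (mat_adjoint B * mat_adjoint A)" "j < dim_col (mat_adjoint B * mat_adjoint A)"
  hence ij': "i < k" "j < n" using assms by auto
  have "mat_adjoint (A * B) $$ (i, j) = cnj (\<Sum>l<m. A $$ (j,l) * B $$ (l,i))"
    using assms ij' by (simp add: scalar_prod_def atLeast0LessThan)
  also have "\<dots> = (\<Sum>l<m. cnj (B $$ (l,i)) * cnj (A $$ (j,l)))"
    by (simp add: mult.commute)
  also have "\<dots> = (mat_adjoint B * mat_adjoint A) $$ (i, j)"
    using assms ij' by (simp add: scalar_prod_def atLeast0LessThan)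
  finally show "mat_adjoint (A * B) $$ (i, j) = (mat_adjoint B * mat_adjoint A) $$ (i, j)" .
qed (use assms in auto)

lemma mat_adjoint_one[simp]: "mat_adjoint (1\<^sub>m n :: complex mat) = 1\<^sub>m n"
  by (rule eq_matI, auto)

lemma mat_adjoint_zero[simp]: "mat_adjoint (0\<^sub>m n m :: complex mat) = 0\<^sub>m m n"
  by (rule eq_matI, auto)

lemma mat_adjoint_add: assumes "(A::complex mat) \<in> carrier_mat n m" "B \<in> carrier_mat n m"
  shows "mat_adjoint (A + B) = mat_adjoint A + mat_adjoint B"
  by (rule eq_matI, use assms in auto)

lemma mat_adjoint_minus: assumes "(A::complex mat) \<in> carrier_mat n m" "B \<in> carrier_mat n m"
  shows "mat_adjoint (A - B) = mat_adjoint A - mat_adjoint B"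
  by (rule eq_matI, use assms in auto)

lemma mat_adjoint_smult: "mat_adjoint (c \<cdot>\<^sub>m (A::complex mat)) = cnj c \<cdot>\<^sub>m mat_adjoint A"
  by (rule eq_matI, auto)

lemma mat_adjoint_transpose: "mat_adjoint (transpose_mat (X::complex mat)) = transpose_mat (mat_adjoint X)"
  by (rule eq_matI) auto

lemma mat_adjoint_four_block: assumes "A \<in> carrier_mat n1 m1" "B \<in> carrier_mat n1 m2" "C \<in> carrier_mat n2 m1" "D \<in> carrier_mat n2 m2"
  shows "mat_adjoint (four_block_mat A B C D) = four_block_mat (mat_adjoint A) (mat_adjoint C) (mat_adjoint B) (mat_adjoint (D::complex mat))"
  by (rule eq_matI, use assms in auto)

lemma mat_adjoint_hermitian_sandwich: assumes A: "(A::complex mat) \<in> carrier_mat n n" "mat_adjoint A = A" and V: "V \<in> carrier_mat n k"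
  shows "mat_adjoint (mat_adjoint V * A * V) = mat_adjoint V * A * V"
proof -
  have aV: "mat_adjoint V \<in> carrier_mat k n" using V by simp
  have "mat_adjoint (mat_adjoint V * A * V) = mat_adjoint V * mat_adjoint (mat_adjoint V * A)"
    using mat_adjoint_mult[OF mult_carrier_mat[OF aV A(1)] V] by simp
  also have "\<dots> = mat_adjoint V * (A * V)" using mat_adjoint_mult[OF aV A(1)] A(2) by simp
  also have "\<dots> = mat_adjoint V * A * V" using assoc_mult_mat[OF aV A(1) V] by simp
  finally show ?thesis .
qed

lemma sandwich_smult: assumes G: "(G::complex mat) \<in> carrier_mat m n" and K: "K \<in> carrier_mat m m"
  shows "mat_adjoint (c \<cdot>\<^sub>m G) * K * (c \<cdot>\<^sub>m G) = (cnj c * c) \<cdot>\<^sub>m (mat_adjoint G * K * G)"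
proof -
  have aG: "mat_adjoint G \<in> carrier_mat n m" using G by simp
  have aGK: "mat_adjoint G * K \<in> carrier_mat n m" using aG K by simp
  have "mat_adjoint (c \<cdot>\<^sub>m G) * K * (c \<cdot>\<^sub>m G) = (cnj c \<cdot>\<^sub>m (mat_adjoint G * K)) * (c \<cdot>\<^sub>m G)"
    unfolding mat_adjoint_smult using mult_smult_assoc_mat[OF aG K] by simp
  also have "\<dots> = cnj c \<cdot>\<^sub>m ((mat_adjoint G * K) * (c \<cdot>\<^sub>m G))" by (rule mult_smult_assoc_mat[OF aGK smult_carrier_mat[OF G]])
  also have "(mat_adjoint G * K) * (c \<cdot>\<^sub>m G) = c \<cdot>\<^sub>m (mat_adjoint G * K * G)" by (rule mult_smult_distrib[OF aGK G])
  also have "cnj c \<cdot>\<^sub>m (c \<cdot>\<^sub>m (mat_adjoint G * K * G)) = (cnj c * c) \<cdot>\<^sub>m (mat_adjoint G * K * G)"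
    by (rule eq_matI) auto
  finally show ?thesis .
qed

lemma index_mult_sum: "X \<in> carrier_mat p n \<Longrightarrow> Y \<in> carrier_mat n q \<Longrightarrow> a < p \<Longrightarrow> b < q \<Longrightarrow>
  (X * Y) $$ (a,b) = (\<Sum>i<n. X $$ (a,i) * Y $$ (i,b))"
  by (simp add: scalar_prod_def atLeast0LessThan)

lemma index_adjoint_mult_sum: "(X::complex mat) \<in> carrier_mat n p \<Longrightarrow> Y \<in> carrier_mat n q \<Longrightarrow> a < p \<Longrightarrow> b < q \<Longrightarrow>
  (mat_adjoint X * Y) $$ (a,b) = (\<Sum>i<n. cnj (X $$ (i,a)) * Y $$ (i,b))"
  by (simp add: scalar_prod_def atLeast0LessThan)

lemma assoc_mult_mat5: assumes X1: "(X1::complex mat) \<in> carrier_mat a b" and X2: "X2 \<in> carrier_mat b c"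
  and X3: "X3 \<in> carrier_mat c d" and X4: "X4 \<in> carrier_mat d f" and X5: "X5 \<in> carrier_mat f g"
  shows "(X1 * X2) * X3 * (X4 * X5) = X1 * (X2 * X3 * X4) * X5"
proof -
  have c12: "X1 * X2 \<in> carrier_mat a c" using X1 X2 by simp
  have c23: "X2 * X3 \<in> carrier_mat b d" using X2 X3 by simp
  have c234: "X2 * X3 * X4 \<in> carrier_mat b f" using c23 X4 by simp
  have s1: "(X1 * X2) * X3 * (X4 * X5) = ((X1 * X2) * X3 * X4) * X5"
    using assoc_mult_mat[OF mult_carrier_mat[OF c12 X3] X4 X5] by simp
  have s2: "(X1 * X2) * X3 = X1 * (X2 * X3)" using assoc_mult_mat[OF X1 X2 X3] .
  have s3: "X1 * (X2 * X3) * X4 = X1 * (X2 * X3 * X4)" using assoc_mult_mat[OF X1 c23 X4] .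
  have "((X1 * X2) * X3 * X4) * X5 = X1 * (X2 * X3 * X4) * X5" by (simp only: s2 s3)
  with s1 show ?thesis by simp
qed

lemma minus_zero_mat_right: "(A::complex mat) \<in> carrier_mat n m \<Longrightarrow> A - 0\<^sub>m n m = A"
  by (rule eq_matI) auto

lemma unitary_right_inverse: assumes W: "(W::complex mat) \<in> carrier_mat n n" and WW: "mat_adjoint W * W = 1\<^sub>m n"
  shows "W * mat_adjoint W = 1\<^sub>m n"
  using mat_mult_left_right_inverse[OF mat_adjoint_carrier[OF W] W WW] .

lemma mtrace_mult_commute: assumes "(A::complex mat) \<in> carrier_mat n m" "B \<in> carrier_mat m n"
  shows "mtrace (A * B) = mtrace (B * A)"
proof -
  have "mtrace (A * B) = (\<Sum>i<n. \<Sum>k<m. A $$ (i,k) * B $$ (k,i))"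
    using assms by (simp add: mtrace_def scalar_prod_def atLeast0LessThan)
  also have "\<dots> = (\<Sum>k<m. \<Sum>i<n. B $$ (k,i) * A $$ (i,k))"
    by (subst sum.swap, simp add: mult.commute)
  also have "\<dots> = mtrace (B * A)"
    using assms by (simp add: mtrace_def scalar_prod_def atLeast0LessThan)
  finally show ?thesis .
qed

lemma mtrace_minus: assumes "(A::complex mat) \<in> carrier_mat n n" "B \<in> carrier_mat n n"
  shows "mtrace (A - B) = mtrace A - mtrace B"
  using assms by (simp add: mtrace_def sum_subtractf)

lemma minv_inverse: assumes A: "(A::complex mat) \<in> carrier_mat n n" and d: "det A \<noteq> 0"
  shows "A * minv A = 1\<^sub>m n" "minv A * A = 1\<^sub>m n" "minv A \<in> carrier_mat n n"
proof -
  have "mat_inverse A \<noteq> None"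
    using mat_inverse(1)[OF A, where b="()"] det_non_zero_imp_unit[OF A d, where b="()"] by blast
  then obtain B where B: "mat_inverse A = Some B" by auto
  from mat_inverse(2)[OF A B] B show "A * minv A = 1\<^sub>m n" "minv A * A = 1\<^sub>m n" "minv A \<in> carrier_mat n n"
    by (auto simp: minv_def)
qed

lemma minv_right_inverse_unique: assumes A: "(A::complex mat) \<in> carrier_mat n n" and B: "B \<in> carrier_mat n n"
  and AB: "A * B = 1\<^sub>m n"
  shows "minv A = B" "det A \<noteq> 0"
proof -
  have "det A * det B = 1" using det_mult[OF A B] AB by simp
  then show d: "det A \<noteq> 0" by auto
  note m = minv_inverse[OF A d]
  have "minv A = minv A * (A * B)" using AB m by simp
  also have "\<dots> = (minv A * A) * B" using m A B by (metis assoc_mult_mat)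
  also have "\<dots> = B" using m B by simp
  finally show "minv A = B" .
qed

lemma invertible_mat_inverse: assumes "invertible_mat (C::complex mat)" "C \<in> carrier_mat n n"
  shows "\<exists>Ci\<in>carrier_mat n n. C * Ci = 1\<^sub>m n \<and> Ci * C = 1\<^sub>m n"
proof -
  obtain B where B: "inverts_mat C B" "inverts_mat B C" using assms(1) unfolding invertible_mat_def by blast
  have CB: "C * B = 1\<^sub>m n" using B(1) assms(2) unfolding inverts_mat_def by simp
  have "dim_col B = n" using arg_cong[OF CB, of dim_col] by simp
  moreover have "dim_row B = n" using B(2) assms(2) unfolding inverts_mat_def
    by (metis index_mult_mat(3) index_one_mat(3) carrier_matD(2))
  ultimately have Bc: "B \<in> carrier_mat n n" by (intro carrier_matI) auto
  have "B * C = 1\<^sub>m n" using B(2) Bc unfolding inverts_mat_def by simp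
  with CB Bc show ?thesis by blast
qed

definition diag_of :: "nat \<Rightarrow> (nat \<Rightarrow> complex) \<Rightarrow> complex mat" where
  "diag_of n f = mat n n (\<lambda>(i,j). if i = j then f i else 0)"

lemma diag_of_carrier[simp]: "diag_of n f \<in> carrier_mat n n" by (simp add: diag_of_def)

lemma diag_of_mult: "diag_of n f * diag_of n g = diag_of n (\<lambda>i. f i * g i)"
proof (rule eq_matI)
  fix i j assume "i < dim_row (diag_of n (\<lambda>i. f i * g i))" "j < dim_col (diag_of n (\<lambda>i. f i * g i))"
  then have ij: "i < n" "j < n" by (auto simp: diag_of_def)
  have "(diag_of n f * diag_of n g) $$ (i,j) = (\<Sum>k<n. diag_of n f $$ (i,k) * diag_of n g $$ (k,j))"
    using ij by (subst index_mult_sum[OF diag_of_carrier diag_of_carrier]) auto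
  also have "\<dots> = (\<Sum>k<n. if k = i then f i * diag_of n g $$ (i,j) else 0)"
    using ij by (intro sum.cong refl) (auto simp: diag_of_def)
  also have "\<dots> = diag_of n (\<lambda>i. f i * g i) $$ (i,j)" using ij by (simp add: diag_of_def)
  finally show "(diag_of n f * diag_of n g) $$ (i,j) = diag_of n (\<lambda>i. f i * g i) $$ (i,j)" .
qed (auto simp: diag_of_def)

lemma mtrace_mult_diag_of: assumes B: "B \<in> carrier_mat n n"
  shows "mtrace (B * diag_of n g) = (\<Sum>i<n. B $$ (i,i) * g i)"
proof -
  have "\<And>i. i < n \<Longrightarrow> (B * diag_of n g) $$ (i,i) = B $$ (i,i) * g i"
  proof -
    fix i assume i: "i < n"
    have "(B * diag_of n g) $$ (i,i) = (\<Sum>k<n. B $$ (i,k) * diag_of n g $$ (k,i))"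
      using i by (subst index_mult_sum[OF B diag_of_carrier]) auto
    also have "\<dots> = (\<Sum>k<n. if k = i then B $$ (i,i) * g i else 0)"
      using i by (intro sum.cong refl) (auto simp: diag_of_def)
    finally show "(B * diag_of n g) $$ (i,i) = B $$ (i,i) * g i" using i by simp
  qed
  then show ?thesis unfolding mtrace_def using B by (intro sum.cong) auto
qed

section \<open>Kronecker products\<close>

lemma mult_add_less_mult: assumes "(i::nat) < a" "j < b" shows "i * b + j < a * b"
proof -
  have "i * b + j < (i + 1) * b" using assms by simp
  also have "\<dots> \<le> a * b" using assms by (intro mult_right_mono) auto
  finally show ?thesis .
qed

lemma div_mod_less_mult: "(i::nat) < p * q \<Longrightarrow> i div q < p \<and> i mod q < q"
  by (cases "q = 0") (auto simp: div_less_iff_less_mult mult.commute)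

lemma sum_lessThan_mult: "(\<Sum>k<(a::nat)*b. f k) = (\<Sum>i<a. \<Sum>j<b. f (i*b + j))"
proof -
  have "bij_betw (\<lambda>(i,j). i*b+j) ({..<a}\<times>{..<b}) {..<a*b}"
    by (rule bij_betw_byWitness[where f'="\<lambda>k. (k div b, k mod b)"]) (auto simp: mult_add_less_mult div_mod_less_mult)
  then have "(\<Sum>k<a*b. f k) = (\<Sum>(i,j)\<in>{..<a}\<times>{..<b}. f (i*b + j))"
    by (subst sum.reindex_bij_betw[symmetric]) (auto intro: sum.cong)
  also have "\<dots> = (\<Sum>i<a. \<Sum>j<b. f (i*b + j))"
    by (rule sum.cartesian_product[symmetric])
  finally show ?thesis .
qed

lemma dim_kron[simp]: "dim_row (kron A B) = dim_row A * dim_row B" "dim_col (kron A B) = dim_col A * dim_col B"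
  by (simp_all add: kron_def)

lemma kron_carrier[simp,intro]: "A \<in> carrier_mat a1 a2 \<Longrightarrow> B \<in> carrier_mat b1 b2 \<Longrightarrow> kron A B \<in> carrier_mat (a1*b1) (a2*b2)"
  by (intro carrier_matI, auto)

lemma index_kron: "i < dim_row A * dim_row B \<Longrightarrow> j < dim_col A * dim_col B \<Longrightarrow>
  kron A B $$ (i,j) = A $$ (i div dim_row B, j div dim_col B) * B $$ (i mod dim_row B, j mod dim_col B)"
  by (simp add: kron_def)

lemma index_kron_block: assumes "ia < dim_row A" "ib < dim_row B" "ja < dim_col A" "jb < dim_col B"
  shows "kron A B $$ (ia * dim_row B + ib, ja * dim_col B + jb) = A $$ (ia, ja) * B $$ (ib, jb)"
  using assms mult_add_less_mult[OF assms(1,2)] mult_add_less_mult[OF assms(3,4)] by (simp add: index_kron)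

lemma kron_mult_kron: assumes A: "(A::complex mat) \<in> carrier_mat a1 a2" and B: "B \<in> carrier_mat b1 b2"
  and C: "C \<in> carrier_mat a2 a3" and D: "D \<in> carrier_mat b2 b3"
  shows "kron A B * kron C D = kron (A * C) (B * D)"
proof (rule eq_matI)
  fix i j assume "i < dim_row (kron (A * C) (B * D))" "j < dim_col (kron (A * C) (B * D))"
  hence i: "i < a1 * b1" and j: "j < a3 * b3" using A B C D by auto
  have i1: "i div b1 < a1" and i2: "i mod b1 < b1" using div_mod_less_mult[OF i] by auto
  have j1: "j div b3 < a3" and j2: "j mod b3 < b3" using div_mod_less_mult[OF j] by auto
  have "(kron A B * kron C D) $$ (i,j) = (\<Sum>k<a2*b2. kron A B $$ (i,k) * kron C D $$ (k,j))"
    using A B C D i j by (simp add: scalar_prod_def atLeast0LessThan)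
  also have "\<dots> = (\<Sum>k1<a2. \<Sum>k2<b2. kron A B $$ (i,k1*b2+k2) * kron C D $$ (k1*b2+k2,j))"
    by (rule sum_lessThan_mult)
  also have "\<dots> = (\<Sum>k1<a2. \<Sum>k2<b2. (A $$ (i div b1, k1) * C $$ (k1, j div b3)) * (B $$ (i mod b1, k2) * D $$ (k2, j mod b3)))"
  proof (intro sum.cong refl)
    fix k1 k2 assume k1: "k1 \<in> {..<a2}" and k2: "k2 \<in> {..<b2}"
    have "k1*b2+k2 < a2 * b2" using k1 k2 mult_add_less_mult by auto
    moreover have "(k1*b2+k2) div b2 = k1" "(k1*b2+k2) mod b2 = k2" using k2 by auto
    ultimately show "kron A B $$ (i,k1*b2+k2) * kron C D $$ (k1*b2+k2,j) =
       (A $$ (i div b1, k1) * C $$ (k1, j div b3)) * (B $$ (i mod b1, k2) * D $$ (k2, j mod b3))"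
      using A B C D i j by (simp add: index_kron)
  qed
  also have "\<dots> = (\<Sum>k1<a2. A $$ (i div b1, k1) * C $$ (k1, j div b3)) * (\<Sum>k2<b2. B $$ (i mod b1, k2) * D $$ (k2, j mod b3))"
    by (simp add: sum_product)
  also have "\<dots> = kron (A * C) (B * D) $$ (i,j)"
    using A B C D i j i1 i2 j1 j2 by (simp add: index_kron scalar_prod_def atLeast0LessThan)
  finally show "(kron A B * kron C D) $$ (i,j) = kron (A * C) (B * D) $$ (i,j)" .
qed (use A B C D in auto)

lemma mat_adjoint_kron: "mat_adjoint (kron A B) = kron (mat_adjoint A) (mat_adjoint (B::complex mat))"
proof (rule eq_matI)
  fix i j assume "i < dim_row (kron (mat_adjoint A) (mat_adjoint B))" "j < dim_col (kron (mat_adjoint A) (mat_adjoint B))"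
  thus "mat_adjoint (kron A B) $$ (i, j) = kron (mat_adjoint A) (mat_adjoint B) $$ (i, j)"
    using div_mod_less_mult[of i "dim_col A" "dim_col B"] div_mod_less_mult[of j "dim_row A" "dim_row B"]
    by (simp add: index_kron)
qed auto

lemma kron_one: "kron (1\<^sub>m a) (1\<^sub>m b) = (1\<^sub>m (a*b) :: complex mat)"
proof (rule eq_matI)
  fix i j assume ij: "i < dim_row (1\<^sub>m (a*b) :: complex mat)" "j < dim_col (1\<^sub>m (a*b) :: complex mat)"
  hence b: "b > 0" by (cases b, auto)
  have "(i div b = j div b \<and> i mod b = j mod b) = (i = j)"
    by (metis div_mult_mod_eq)
  thus "kron (1\<^sub>m a) (1\<^sub>m b) $$ (i, j) = (1\<^sub>m (a*b) :: complex mat) $$ (i, j)"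
    using ij b by (auto simp: index_kron div_less_iff_less_mult mult.commute)
qed auto

lemma kron_smult_left: "kron (c \<cdot>\<^sub>m A) B = c \<cdot>\<^sub>m kron A (B::complex mat)"
  by (rule eq_matI, auto simp: index_kron dest!: div_mod_less_mult)

lemma kron_zero_left: "B \<in> carrier_mat b1 b2 \<Longrightarrow> kron (0\<^sub>m a1 a2) B = (0\<^sub>m (a1*b1) (a2*b2) :: complex mat)"
  by (rule eq_matI, auto simp: index_kron dest!: div_mod_less_mult)

lemma mtrace_kron: assumes A: "(A::complex mat) \<in> carrier_mat a a" and B: "B \<in> carrier_mat b b"
  shows "mtrace (kron A B) = mtrace A * mtrace B"
proof -
  have "mtrace (kron A B) = (\<Sum>k<a*b. kron A B $$ (k,k))" using A B by (simp add: mtrace_def)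
  also have "\<dots> = (\<Sum>i<a. \<Sum>j<b. kron A B $$ (i*b+j,i*b+j))" by (rule sum_lessThan_mult)
  also have "\<dots> = (\<Sum>i<a. \<Sum>j<b. A $$ (i,i) * B $$ (j,j))"
  proof (intro sum.cong refl)
    fix i j assume "i \<in> {..<a}" "j \<in> {..<b}"
    thus "kron A B $$ (i*b+j,i*b+j) = A $$ (i,i) * B $$ (j,j)"
      using A B index_kron_block[of i A j B i j] by simp
  qed
  also have "\<dots> = mtrace A * mtrace B" using A B by (simp add: mtrace_def sum_product)
  finally show ?thesis .
qed

lemma kron_one_right_orthonormal:
  assumes V: "(V::complex mat) \<in> carrier_mat M k" and VV: "mat_adjoint V * V = 1\<^sub>m k"
  shows "mat_adjoint (kron V (1\<^sub>m N)) * kron V (1\<^sub>m N) = 1\<^sub>m (k*N)"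
  unfolding mat_adjoint_kron mat_adjoint_one
  using kron_mult_kron[OF mat_adjoint_carrier[OF V] one_carrier_mat V one_carrier_mat] VV kron_one by simp

lemma mtrace_kron_compression:
  assumes V: "(V::complex mat) \<in> carrier_mat M k" and A: "A \<in> carrier_mat M M" and B: "B \<in> carrier_mat N N"
  shows "mtrace (mat_adjoint (kron V (1\<^sub>m N)) * kron A B * kron V (1\<^sub>m N)) = mtrace (mat_adjoint V * A * V) * mtrace B"
proof -
  have aV: "mat_adjoint V \<in> carrier_mat k M" using V by simp
  have "mat_adjoint (kron V (1\<^sub>m N)) * kron A B = kron (mat_adjoint V * A) (1\<^sub>m N * B)"
    unfolding mat_adjoint_kron mat_adjoint_one by (rule kron_mult_kron[OF aV one_carrier_mat A B])
  also have "\<dots> * kron V (1\<^sub>m N) = kron (mat_adjoint V * A * V) (1\<^sub>m N * B * 1\<^sub>m N)"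
    by (rule kron_mult_kron[OF mult_carrier_mat[OF aV A] mult_carrier_mat[OF one_carrier_mat B] V one_carrier_mat])
  also have "1\<^sub>m N * B * 1\<^sub>m N = B" using B by simp
  finally show ?thesis using mtrace_kron[OF mult_carrier_mat[OF mult_carrier_mat[OF aV A] V] B] by simp
qed

lemma kron_isometry_sandwich_scalar:
  assumes Q: "(Q::complex mat) \<in> carrier_mat L r" and QQ: "mat_adjoint Q * Q = 1\<^sub>m r" and B: "B \<in> carrier_mat N N"
  shows "mat_adjoint (kron Q (1\<^sub>m N)) * kron (c \<cdot>\<^sub>m 1\<^sub>m L) B * kron Q (1\<^sub>m N) = kron (c \<cdot>\<^sub>m 1\<^sub>m r) B"
proof -
  have aQ: "mat_adjoint Q \<in> carrier_mat r L" using Q by simp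
  have cL: "c \<cdot>\<^sub>m 1\<^sub>m L \<in> carrier_mat L L" by simp
  have "mat_adjoint (kron Q (1\<^sub>m N)) * kron (c \<cdot>\<^sub>m 1\<^sub>m L) B = kron (mat_adjoint Q * (c \<cdot>\<^sub>m 1\<^sub>m L)) (1\<^sub>m N * B)"
    unfolding mat_adjoint_kron mat_adjoint_one by (rule kron_mult_kron[OF aQ one_carrier_mat cL B])
  also have "\<dots> * kron Q (1\<^sub>m N) = kron (mat_adjoint Q * (c \<cdot>\<^sub>m 1\<^sub>m L) * Q) (1\<^sub>m N * B * 1\<^sub>m N)"
    by (rule kron_mult_kron[OF mult_carrier_mat[OF aQ cL] mult_carrier_mat[OF one_carrier_mat B] Q one_carrier_mat])
  also have "mat_adjoint Q * (c \<cdot>\<^sub>m 1\<^sub>m L) * Q = c \<cdot>\<^sub>m 1\<^sub>m r"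
    using mult_smult_distrib[OF aQ one_carrier_mat] right_mult_one_mat[OF aQ] mult_smult_assoc_mat[OF aQ Q] QQ by simp
  also have "1\<^sub>m N * B * 1\<^sub>m N = B" using B by simp
  finally show ?thesis .
qed

section \<open>Quadratic forms and positivity\<close>

text \<open>Vectors are n x 1 matrices here, so that quadratic forms compose with matrix products;
  hpd_pos_def connects this to hpd, which is phrased with vec.\<close>
definition quad_form :: "complex mat \<Rightarrow> complex mat \<Rightarrow> complex" where
  "quad_form A v = (mat_adjoint v * A * v) $$ (0,0)"

definition col_of :: "nat \<Rightarrow> (nat \<Rightarrow> complex) \<Rightarrow> complex mat" where
  "col_of n f = mat n 1 (\<lambda>(i,_). f i)"

definition unit_col :: "nat \<Rightarrow> nat \<Rightarrow> complex mat" where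
  "unit_col n a = col_of n (\<lambda>i. if i = a then 1 else 0)"

lemma col_of_carrier[simp,intro]: "col_of n f \<in> carrier_mat n 1"
  by (simp add: col_of_def)

lemma col_of_carrier'[simp]: "col_of n f \<in> carrier_mat n (Suc 0)"
  by (simp add: col_of_def)

lemma unit_col_carrier'[simp]: "unit_col n a \<in> carrier_mat n (Suc 0)"
  by (simp add: unit_col_def)

lemma index_col_of[simp]: "i < n \<Longrightarrow> col_of n f $$ (i,0) = f i"
  by (simp add: col_of_def)

lemma unit_col_carrier[simp,intro]: "unit_col n a \<in> carrier_mat n 1"
  unfolding unit_col_def by (rule col_of_carrier)

lemma quad_form_sum: assumes A: "A \<in> carrier_mat n n" and v: "v \<in> carrier_mat n 1"
  shows "quad_form A v = (\<Sum>i<n. \<Sum>j<n. cnj (v $$ (i,0)) * A $$ (i,j) * v $$ (j,0))"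
proof -
  have "quad_form A v = (\<Sum>j<n. (\<Sum>i<n. cnj (v $$ (i,0)) * A $$ (i,j)) * v $$ (j,0))"
    using A v by (simp add: quad_form_def scalar_prod_def atLeast0LessThan)
  also have "\<dots> = (\<Sum>j<n. \<Sum>i<n. cnj (v $$ (i,0)) * A $$ (i,j) * v $$ (j,0))"
    by (simp add: sum_distrib_right)
  also have "\<dots> = (\<Sum>i<n. \<Sum>j<n. cnj (v $$ (i,0)) * A $$ (i,j) * v $$ (j,0))"
    by (rule sum.swap)
  finally show ?thesis .
qed

lemma quad_form_unit_col: assumes A: "A \<in> carrier_mat n n" and a: "a < n"
  shows "quad_form A (unit_col n a) = A $$ (a,a)"
proof -
  have "quad_form A (unit_col n a) = (\<Sum>i<n. if i = a then (\<Sum>j<n. if j = a then A $$ (i,j) else 0) else 0)"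
    using A a by (subst quad_form_sum[OF A unit_col_carrier], intro sum.cong refl, simp add: unit_col_def if_distrib[of "(*) _"] cong: if_cong)
  also have "\<dots> = A $$ (a,a)" using a by (simp add: sum.delta)
  finally show ?thesis .
qed

lemma quad_form_adjoint: assumes A: "A \<in> carrier_mat n n" and v: "v \<in> carrier_mat n 1"
  shows "quad_form (mat_adjoint A) v = cnj (quad_form A v)"
proof -
  have av: "mat_adjoint v \<in> carrier_mat 1 n" using v by simp
  have avA: "mat_adjoint v * A \<in> carrier_mat 1 n" using av A by (rule mult_carrier_mat)
  have Av: "mat_adjoint A \<in> carrier_mat n n" using A by simp
  have "mat_adjoint (mat_adjoint v * A * v) = mat_adjoint v * mat_adjoint (mat_adjoint v * A)"
    using mat_adjoint_mult[OF avA v] by simp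
  also have "\<dots> = mat_adjoint v * (mat_adjoint A * v)"
    using mat_adjoint_mult[OF av A] by simp
  also have "\<dots> = mat_adjoint v * mat_adjoint A * v"
    using assoc_mult_mat[OF av Av v] by simp
  finally have eq: "mat_adjoint (mat_adjoint v * A * v) = mat_adjoint v * mat_adjoint A * v" .
  have c: "mat_adjoint v * A * v \<in> carrier_mat 1 1" using avA v by (rule mult_carrier_mat)
  have "cnj (quad_form A v) = mat_adjoint (mat_adjoint v * A * v) $$ (0,0)"
    using c unfolding quad_form_def by (subst index_mat_adjoint) auto
  thus ?thesis unfolding quad_form_def eq by simp
qed

lemma Im_quad_form_hermitian: assumes A: "A \<in> carrier_mat n n" "mat_adjoint A = A" and v: "v \<in> carrier_mat n 1"
  shows "Im (quad_form A v) = 0"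
proof -
  have e: "quad_form A v = cnj (quad_form A v)" using quad_form_adjoint[OF A(1) v] A(2) by simp
  show ?thesis using arg_cong[OF e, of Im] by simp
qed

lemma quad_form_sandwich: assumes F: "F \<in> carrier_mat m n" and B: "B \<in> carrier_mat m m" and v: "v \<in> carrier_mat n 1"
  shows "quad_form (mat_adjoint F * B * F) v = quad_form B (F * v)"
proof -
  have av: "mat_adjoint v \<in> carrier_mat 1 n" using v by simp
  have aF: "mat_adjoint F \<in> carrier_mat n m" using F by simp
  have Fv: "F * v \<in> carrier_mat m 1" using F v by (rule mult_carrier_mat)
  have aFB: "mat_adjoint F * B \<in> carrier_mat n m" using aF B by (rule mult_carrier_mat)
  have avaF: "mat_adjoint v * mat_adjoint F \<in> carrier_mat 1 m" using av aF by (rule mult_carrier_mat)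
  have "mat_adjoint v * (mat_adjoint F * B * F) * v = mat_adjoint v * ((mat_adjoint F * B) * (F * v))"
    using assoc_mult_mat[OF av mult_carrier_mat[OF aFB F] v] assoc_mult_mat[OF aFB F v] by simp
  also have "\<dots> = (mat_adjoint v * mat_adjoint F * B) * (F * v)"
    using assoc_mult_mat[OF av aFB Fv] assoc_mult_mat[OF av aF B] by simp
  also have "\<dots> = mat_adjoint (F * v) * B * (F * v)"
    using mat_adjoint_mult[OF F v] by simp
  finally show ?thesis unfolding quad_form_def by simp
qed

lemma quad_form_add: assumes A: "A \<in> carrier_mat n n" and B: "B \<in> carrier_mat n n" and v: "v \<in> carrier_mat n 1"
  shows "quad_form (A + B) v = quad_form A v + quad_form B v"
proof -
  have AB: "A + B \<in> carrier_mat n n" using A B by simp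
  have "quad_form (A + B) v = (\<Sum>i<n. \<Sum>j<n. cnj (v $$ (i,0)) * A $$ (i,j) * v $$ (j,0) + cnj (v $$ (i,0)) * B $$ (i,j) * v $$ (j,0))"
    unfolding quad_form_sum[OF AB v] using A B by (intro sum.cong refl) (simp add: algebra_simps)
  then show ?thesis unfolding quad_form_sum[OF A v] quad_form_sum[OF B v] by (simp add: sum.distrib)
qed

lemma quad_form_one: assumes v: "v \<in> carrier_mat n 1"
  shows "quad_form (1\<^sub>m n) v = (mat_adjoint v * v) $$ (0,0)"
  unfolding quad_form_def using v by simp

lemma quad_form_zero: "A \<in> carrier_mat n n \<Longrightarrow> quad_form A (0\<^sub>m n 1) = 0"
  by (simp add: quad_form_sum)

lemma col_nonzero_entry: assumes w: "(w::complex mat) \<in> carrier_mat n 1" and nz: "w \<noteq> 0\<^sub>m n 1"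
  shows "\<exists>i<n. w $$ (i,0) \<noteq> 0"
proof (rule ccontr)
  assume "\<not> (\<exists>i<n. w $$ (i,0) \<noteq> 0)"
  then have "w = 0\<^sub>m n 1" using w by (intro eq_matI) auto
  with nz show False by simp
qed

lemma col_norm_sq_pos: assumes w: "(w::complex mat) \<in> carrier_mat n 1" and nz: "w \<noteq> 0\<^sub>m n 1"
  shows "(\<Sum>i<n. (cmod (w $$ (i,0)))^2) > 0"
proof -
  obtain i where i: "i < n" "w $$ (i,0) \<noteq> 0" using col_nonzero_entry[OF w nz] by blast
  show ?thesis by (rule sum_pos2[of _ i]) (use i in auto)
qed

lemma index_adjoint_self_mult: assumes w: "(w::complex mat) \<in> carrier_mat n 1"
  shows "(mat_adjoint w * w) $$ (0,0) = of_real (\<Sum>i<n. (cmod (w $$ (i,0)))^2)"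
proof -
  have "(mat_adjoint w * w) $$ (0,0) = (\<Sum>i<n. cnj (w $$ (i,0)) * w $$ (i,0))"
    by (subst index_adjoint_mult_sum[OF w w]) auto
  also have "\<dots> = (\<Sum>i<n. of_real ((cmod (w $$ (i,0)))^2))"
    by (intro sum.cong refl) (metis complex_norm_square mult.commute)
  finally show ?thesis by simp
qed

definition pos_def :: "nat \<Rightarrow> complex mat \<Rightarrow> bool" where
  "pos_def n A \<longleftrightarrow> A \<in> carrier_mat n n \<and> (\<forall>v\<in>carrier_mat n 1. v \<noteq> 0\<^sub>m n 1 \<longrightarrow> 0 < Re (quad_form A v))"

definition pos_semidef :: "nat \<Rightarrow> complex mat \<Rightarrow> bool" where
  "pos_semidef n A \<longleftrightarrow> A \<in> carrier_mat n n \<and> (\<forall>v\<in>carrier_mat n 1. 0 \<le> Re (quad_form A v))"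

lemma col_zero_neq_zero: assumes v: "(v::complex mat) \<in> carrier_mat n 1" and nz: "v \<noteq> 0\<^sub>m n 1"
  shows "col v 0 \<noteq> 0\<^sub>v n"
proof
  assume c: "col v 0 = 0\<^sub>v n"
  have "v = 0\<^sub>m n 1"
  proof (rule eq_matI)
    fix i j assume "i < dim_row (0\<^sub>m n 1 :: complex mat)" "j < dim_col (0\<^sub>m n 1 :: complex mat)"
    then have ij: "i < n" "j = 0" by auto
    have "v $$ (i,0) = col v 0 $ i" using v ij by simp
    then show "v $$ (i,j) = 0\<^sub>m n 1 $$ (i,j)" using c ij by simp
  qed (use v in auto)
  with nz show False by simp
qed

lemma quad_form_inner: assumes A: "A \<in> carrier_mat n n" and v: "(v::complex mat) \<in> carrier_mat n 1"
  shows "(A *\<^sub>v col v 0) \<bullet>c col v 0 = quad_form A v"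
proof -
  have "(A *\<^sub>v col v 0) \<bullet>c col v 0 = (\<Sum>i<n. (\<Sum>j<n. A $$ (i,j) * v $$ (j,0)) * cnj (v $$ (i,0)))"
    using A v by (simp add: scalar_prod_def mult_mat_vec_def atLeast0LessThan)
  also have "\<dots> = quad_form A v"
    using A v by (simp add: quad_form_sum sum_distrib_left mult_ac)
  finally show ?thesis .
qed

lemma hpd_pos_def: assumes "hpd n A" shows "pos_def n A"
proof -
  have A: "A \<in> carrier_mat n n" using assms by (simp add: hpd_def hermitian_def)
  show ?thesis unfolding pos_def_def
  proof (intro conjI ballI impI A)
    fix v :: "complex mat" assume v: "v \<in> carrier_mat n 1" and nz: "v \<noteq> 0\<^sub>m n 1"
    have "col v 0 \<in> carrier_vec n" by (rule carrier_vecI) (use carrier_matD(1)[OF v] in simp)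
    then have "0 < Re ((A *\<^sub>v col v 0) \<bullet>c col v 0)"
      using assms col_zero_neq_zero[OF v nz] unfolding hpd_def by blast
    then show "0 < Re (quad_form A v)" using quad_form_inner[OF A v] by simp
  qed
qed

lemma hpd_hermitian: "hpd n A \<Longrightarrow> mat_adjoint A = A \<and> A \<in> carrier_mat n n"
  by (simp add: hpd_def hermitian_def)

lemma pos_def_det_neq_zero: assumes "pos_def n A" shows "det A \<noteq> 0"
proof
  assume d: "det A = 0"
  have A: "A \<in> carrier_mat n n" using assms by (simp add: pos_def_def)
  obtain c where c: "c \<in> carrier_vec n" "c \<noteq> 0\<^sub>v n" "A *\<^sub>v c = 0\<^sub>v n"
    using det_0_iff_vec_prod_zero_field[OF A] d by blast
  define v where "v = col_of n (\<lambda>i. c $ i)"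
  have v: "v \<in> carrier_mat n 1" unfolding v_def by simp
  have cv: "col v 0 = c" using c by (intro eq_vecI, auto simp: v_def col_of_def)
  have nz: "v \<noteq> 0\<^sub>m n 1"
  proof
    assume "v = 0\<^sub>m n 1"
    then have "col v 0 = 0\<^sub>v n" by auto
    with cv c show False by simp
  qed
  have "quad_form A v = 0" using quad_form_inner[OF A v] cv c by simp
  moreover have "0 < Re (quad_form A v)" using assms v nz unfolding pos_def_def by blast
  ultimately show False by simp
qed

lemma pos_def_pos_semidef: assumes "pos_def n A" shows "pos_semidef n A"
  unfolding pos_semidef_def
proof (intro conjI ballI)
  show A: "A \<in> carrier_mat n n" using assms by (simp add: pos_def_def)
  fix v :: "complex mat" assume v: "v \<in> carrier_mat n 1"
  show "0 \<le> Re (quad_form A v)"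
  proof (cases "v = 0\<^sub>m n 1")
    case True then show ?thesis using quad_form_zero[OF A] by simp
  next
    case False then show ?thesis using assms v unfolding pos_def_def by force
  qed
qed

lemma pos_semidef_one: "pos_semidef n (1\<^sub>m n)"
  unfolding pos_semidef_def
proof (intro conjI ballI)
  show "1\<^sub>m n \<in> carrier_mat n n" by simp
  fix v :: "complex mat" assume v: "v \<in> carrier_mat n 1"
  show "0 \<le> Re (quad_form (1\<^sub>m n) v)" using quad_form_one[OF v] index_adjoint_self_mult[OF v] by (simp add: sum_nonneg)
qed

lemma pos_def_one_plus: assumes X: "X \<in> carrier_mat n n" and Xp: "pos_semidef n X"
  shows "pos_def n (1\<^sub>m n + X)"
  unfolding pos_def_def
proof (intro conjI ballI impI)
  show "1\<^sub>m n + X \<in> carrier_mat n n" using X by simp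
  fix v :: "complex mat" assume v: "v \<in> carrier_mat n 1" and nz: "v \<noteq> 0\<^sub>m n 1"
  have "quad_form (1\<^sub>m n + X) v = of_real (\<Sum>i<n. (cmod (v $$ (i,0)))^2) + quad_form X v"
    using quad_form_add[OF one_carrier_mat X v] quad_form_one[OF v] index_adjoint_self_mult[OF v] by simp
  moreover have "0 \<le> Re (quad_form X v)" using Xp v unfolding pos_semidef_def by blast
  moreover have "(\<Sum>i<n. (cmod (v $$ (i,0)))^2) > 0" by (rule col_norm_sq_pos[OF v nz])
  ultimately show "0 < Re (quad_form (1\<^sub>m n + X) v)" by simp
qed

lemma pos_semidef_sandwich: assumes F: "F \<in> carrier_mat m n" and K: "pos_semidef m K"
  shows "pos_semidef n (mat_adjoint F * K * F)"
  unfolding pos_semidef_def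
proof (intro conjI ballI)
  have Kc: "K \<in> carrier_mat m m" using K by (simp add: pos_semidef_def)
  show "mat_adjoint F * K * F \<in> carrier_mat n n"
    by (rule mult_carrier_mat[OF mult_carrier_mat[OF mat_adjoint_carrier[OF F] Kc] F])
  fix v :: "complex mat" assume v: "v \<in> carrier_mat n 1"
  have "quad_form (mat_adjoint F * K * F) v = quad_form K (F * v)" by (rule quad_form_sandwich[OF F Kc v])
  then show "0 \<le> Re (quad_form (mat_adjoint F * K * F) v)"
    using K mult_carrier_mat[OF F v] unfolding pos_semidef_def by simp
qed

lemma mtrace_sandwich_nonneg: assumes T: "T \<in> carrier_mat n n" and Tp: "pos_semidef n T" and D: "(D::complex mat) \<in> carrier_mat m n"
  shows "0 \<le> Re (mtrace (D * T * mat_adjoint D))"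
proof -
  have aD: "mat_adjoint D \<in> carrier_mat n m" using D by simp
  have DTD: "D * T * mat_adjoint D \<in> carrier_mat m m" by (rule mult_carrier_mat[OF mult_carrier_mat[OF D T] aD])
  have "mtrace (D * T * mat_adjoint D) = (\<Sum>i<m. quad_form T (mat_adjoint D * unit_col m i))"
  proof -
    have "\<And>i. i < m \<Longrightarrow> (D * T * mat_adjoint D) $$ (i,i) = quad_form T (mat_adjoint D * unit_col m i)"
    proof -
      fix i assume i: "i < m"
      have "(D * T * mat_adjoint D) $$ (i,i) = quad_form (D * T * mat_adjoint D) (unit_col m i)"
        using quad_form_unit_col[OF DTD i] by simp
      also have "\<dots> = quad_form (mat_adjoint (mat_adjoint D) * T * mat_adjoint D) (unit_col m i)" by simp
      also have "\<dots> = quad_form T (mat_adjoint D * unit_col m i)" by (rule quad_form_sandwich[OF aD T unit_col_carrier])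
      finally show "(D * T * mat_adjoint D) $$ (i,i) = quad_form T (mat_adjoint D * unit_col m i)" .
    qed
    then show ?thesis using DTD unfolding mtrace_def by (intro sum.cong) auto
  qed
  moreover have "\<And>i. 0 \<le> Re (quad_form T (mat_adjoint D * unit_col m i))"
  proof -
    fix i
    have "mat_adjoint D * unit_col m i \<in> carrier_mat n 1" by (rule mult_carrier_mat[OF aD unit_col_carrier])
    then show "0 \<le> Re (quad_form T (mat_adjoint D * unit_col m i))" using Tp unfolding pos_semidef_def by blast
  qed
  ultimately show ?thesis by (simp add: sum_nonneg)
qed

lemma mtrace_gram_nonneg: assumes C: "(C::complex mat) \<in> carrier_mat N N"
  shows "0 \<le> Re (mtrace (C * mat_adjoint C))"
  using mtrace_sandwich_nonneg[OF one_carrier_mat pos_semidef_one C] right_mult_one_mat[OF C] by simp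

lemma minv_pos_def_hermitian: assumes B: "pos_def n B" and Bh: "mat_adjoint B = B"
  shows "mat_adjoint (minv B) = minv B" "pos_def n (minv B)" "minv B \<in> carrier_mat n n"
    "B * minv B = 1\<^sub>m n" "minv B * B = 1\<^sub>m n"
proof -
  have Bc: "B \<in> carrier_mat n n" using B by (simp add: pos_def_def)
  note mi = minv_inverse[OF Bc pos_def_det_neq_zero[OF B]]
  define W where "W = minv B"
  have Wc: "W \<in> carrier_mat n n" and BW: "B * W = 1\<^sub>m n" and WB: "W * B = 1\<^sub>m n"
    using mi unfolding W_def by auto
  have aWc: "mat_adjoint W \<in> carrier_mat n n" using Wc by simp
  have "mat_adjoint W = mat_adjoint W * (B * W)" using BW right_mult_one_mat[OF aWc] by simp
  also have "\<dots> = (mat_adjoint W * B) * W" using assoc_mult_mat[OF aWc Bc Wc] by simp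
  also have "mat_adjoint W * B = 1\<^sub>m n" using mat_adjoint_mult[OF Bc Wc] BW Bh by simp
  finally have Wh: "mat_adjoint W = W" using Wc by simp
  have "pos_def n W" unfolding pos_def_def
  proof (intro conjI ballI impI Wc)
    fix y :: "complex mat" assume y: "y \<in> carrier_mat n 1" and nz: "y \<noteq> 0\<^sub>m n 1"
    have Wy: "W * y \<in> carrier_mat n 1" using Wc y by simp
    have BWy: "B * (W * y) = y" using assoc_mult_mat[OF Bc Wc y] BW y by simp
    have "quad_form W y = quad_form (mat_adjoint B * W * B) (W * y)"
      using quad_form_sandwich[OF Bc Wc Wy] BWy by simp
    also have "mat_adjoint B * W * B = B" using Bh BW Bc by simp
    finally have e: "quad_form W y = quad_form B (W * y)" .
    have "W * y \<noteq> 0\<^sub>m n 1"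
    proof
      assume "W * y = 0\<^sub>m n 1"
      then have "B * (W * y) = 0\<^sub>m n 1" using right_mult_zero_mat[OF Bc, of 1] by simp
      with BWy nz show False by simp
    qed
    then show "0 < Re (quad_form W y)" using e B Wy unfolding pos_def_def by simp
  qed
  then show "mat_adjoint (minv B) = minv B" "pos_def n (minv B)" "minv B \<in> carrier_mat n n"
    "B * minv B = 1\<^sub>m n" "minv B * B = 1\<^sub>m n"
    using Wh Wc BW WB unfolding W_def by auto
qed

lemma pos_def_sandwich_left_invertible:
  assumes K: "pos_def m K" and G: "G \<in> carrier_mat m n" and H: "H \<in> carrier_mat n m" and HG: "H * G = 1\<^sub>m n"
  shows "pos_def n (mat_adjoint G * K * G)"
  unfolding pos_def_def
proof (intro conjI ballI impI)
  have Kc: "K \<in> carrier_mat m m" using K by (simp add: pos_def_def)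
  show "mat_adjoint G * K * G \<in> carrier_mat n n"
    using mat_adjoint_carrier[OF G] Kc G by (meson mult_carrier_mat)
  fix v :: "complex mat" assume v: "v \<in> carrier_mat n 1" and nz: "v \<noteq> 0\<^sub>m n 1"
  have Gv: "G * v \<in> carrier_mat m 1" using G v by simp
  have "G * v \<noteq> 0\<^sub>m m 1"
  proof
    assume "G * v = 0\<^sub>m m 1"
    then have "H * (G * v) = 0\<^sub>m n 1" using H by simp
    moreover have "H * (G * v) = v" using assoc_mult_mat[OF H G v] HG v by simp
    ultimately show False using nz by simp
  qed
  then have "0 < Re (quad_form K (G * v))" using K Gv unfolding pos_def_def by blast
  then show "0 < Re (quad_form (mat_adjoint G * K * G) v)" using quad_form_sandwich[OF G Kc v] by simp
qed

section \<open>Orthonormal columns\<close>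

lemma wide_mat_kernel: assumes A: "(A::complex mat) \<in> carrier_mat m n" and mn: "m < n"
  shows "\<exists>v\<in>carrier_mat n 1. v \<noteq> 0\<^sub>m n 1 \<and> A * v = 0\<^sub>m m 1"
proof -
  \<comment> \<open>padding A with zero rows gives a singular square matrix\<close>
  define B where "B = mat n n (\<lambda>(i,j). if i < m then A $$ (i,j) else 0)"
  have B: "B \<in> carrier_mat n n" unfolding B_def by simp
  have "B = mat\<^sub>r n n (\<lambda>i. if i = m then 0\<^sub>v n else row B i)"
    by (rule eq_matI, auto simp: B_def)
  moreover have "(\<lambda>i. row B i) \<in> {0..<n} \<rightarrow> carrier_vec n" using B by auto
  ultimately have "det B = 0" using det_row_0[OF mn, of "\<lambda>i. row B i"] by simp
  then obtain c where c: "c \<in> carrier_vec n" "c \<noteq> 0\<^sub>v n" "B *\<^sub>v c = 0\<^sub>v n"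
    using det_0_iff_vec_prod_zero_field[OF B] by blast
  define v where "v = col_of n (\<lambda>i. c $ i)"
  have v: "v \<in> carrier_mat n 1" unfolding v_def by simp
  have nz: "v \<noteq> 0\<^sub>m n 1"
  proof
    assume "v = 0\<^sub>m n 1"
    moreover have "\<And>i. i < n \<Longrightarrow> c $ i = v $$ (i,0)" by (simp add: v_def)
    ultimately have "\<forall>i<n. c $ i = 0" by simp
    then have "c = 0\<^sub>v n" using c by (intro eq_vecI) auto
    with c show False by simp
  qed
  have "A * v = 0\<^sub>m m 1"
  proof (rule eq_matI)
    fix i j assume "i < dim_row (0\<^sub>m m 1 :: complex mat)" "j < dim_col (0\<^sub>m m 1 :: complex mat)"
    then have ij: "i < m" "j = 0" by auto
    have "(A * v) $$ (i,j) = (\<Sum>k<n. A $$ (i,k) * c $ k)" using A v ij by (subst index_mult_sum[OF A v], auto simp: v_def)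
    also have "\<dots> = (B *\<^sub>v c) $ i" using A c(1) ij mn by (simp add: B_def mult_mat_vec_def scalar_prod_def atLeast0LessThan)
    also have "\<dots> = 0" using c ij mn by simp
    finally show "(A * v) $$ (i,j) = 0\<^sub>m m 1 $$ (i,j)" using ij by simp
  qed (use A v in auto)
  with v nz show ?thesis by blast
qed

lemma normalize_col: assumes w: "(w::complex mat) \<in> carrier_mat n 1" and nz: "w \<noteq> 0\<^sub>m n 1"
  shows "\<exists>c. mat_adjoint (c \<cdot>\<^sub>m w) * (c \<cdot>\<^sub>m w) = 1\<^sub>m 1"
proof -
  define r where "r = (\<Sum>i<n. (cmod (w $$ (i,0)))^2)"
  have r: "r > 0" unfolding r_def by (rule col_norm_sq_pos[OF w nz])
  define c where "c = complex_of_real (1 / sqrt r)"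
  have cw: "c \<cdot>\<^sub>m w \<in> carrier_mat n 1" using w by simp
  have "mat_adjoint (c \<cdot>\<^sub>m w) * (c \<cdot>\<^sub>m w) = 1\<^sub>m 1"
  proof (rule eq_matI)
    fix i j assume "i < dim_row (1\<^sub>m 1 :: complex mat)" "j < dim_col (1\<^sub>m 1 :: complex mat)"
    then have ij: "i = 0" "j = 0" by auto
    have "(mat_adjoint (c \<cdot>\<^sub>m w) * (c \<cdot>\<^sub>m w)) $$ (0,0) = (\<Sum>k<n. (cnj c * c) * (cnj (w $$ (k,0)) * w $$ (k,0)))"
      using w by (subst index_adjoint_mult_sum[OF cw cw], auto simp: mult_ac)
    also have "\<dots> = (cnj c * c) * (mat_adjoint w * w) $$ (0,0)"
      by (subst index_adjoint_mult_sum[OF w w]) (auto simp: sum_distrib_left)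
    also have "\<dots> = 1" unfolding index_adjoint_self_mult[OF w] r_def[symmetric] c_def using r
      by (simp add: field_simps of_real_mult[symmetric] del: of_real_mult)
    finally show "(mat_adjoint (c \<cdot>\<^sub>m w) * (c \<cdot>\<^sub>m w)) $$ (i,j) = 1\<^sub>m 1 $$ (i,j)" using ij by simp
  qed (use w in auto)
  then show ?thesis by blast
qed

lemma orthonormal_complement_col:
  assumes A: "(A::complex mat) \<in> carrier_mat m n" and V: "V \<in> carrier_mat n k" and mk: "m + k < n"
  shows "\<exists>q\<in>carrier_mat n 1. mat_adjoint q * q = 1\<^sub>m 1 \<and> A * q = 0\<^sub>m m 1 \<and> mat_adjoint V * q = 0\<^sub>m k 1"
proof -
  define C where "C = mat (m+k) n (\<lambda>(i,j). if i < m then A $$ (i,j) else cnj (V $$ (j, i-m)))"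
  have C: "C \<in> carrier_mat (m+k) n" unfolding C_def by simp
  obtain w where w: "w \<in> carrier_mat n 1" and wnz: "w \<noteq> 0\<^sub>m n 1" and Cw: "C * w = 0\<^sub>m (m+k) 1"
    using wide_mat_kernel[OF C mk] by auto
  have Cw': "(\<Sum>j<n. C $$ (i,j) * w $$ (j,0)) = 0" if "i < m + k" for i
    using Cw that index_mult_sum[OF C w, of i 0] by simp
  have Aw: "A * w = 0\<^sub>m m 1"
  proof (rule eq_matI)
    fix i j assume "i < dim_row (0\<^sub>m m 1 :: complex mat)" "j < dim_col (0\<^sub>m m 1 :: complex mat)"
    then have ij: "i < m" "j = 0" by auto
    have "(A * w) $$ (i,j) = (\<Sum>l<n. C $$ (i,l) * w $$ (l,0))"
      using ij by (subst index_mult_sum[OF A w]) (auto simp: C_def)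
    then show "(A * w) $$ (i,j) = 0\<^sub>m m 1 $$ (i,j)" using Cw'[of i] ij by simp
  qed (use A w in auto)
  have Vw: "mat_adjoint V * w = 0\<^sub>m k 1"
  proof (rule eq_matI)
    fix a b assume "a < dim_row (0\<^sub>m k 1 :: complex mat)" "b < dim_col (0\<^sub>m k 1 :: complex mat)"
    then have ab: "a < k" "b = 0" by auto
    have "(mat_adjoint V * w) $$ (a,b) = (\<Sum>j<n. C $$ (m+a,j) * w $$ (j,0))"
      using ab by (subst index_adjoint_mult_sum[OF V w]) (auto simp: C_def)
    then show "(mat_adjoint V * w) $$ (a,b) = 0\<^sub>m k 1 $$ (a,b)" using Cw'[of "m+a"] ab by simp
  qed (use V w in auto)
  obtain c where cq: "mat_adjoint (c \<cdot>\<^sub>m w) * (c \<cdot>\<^sub>m w) = 1\<^sub>m 1"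
    using normalize_col[OF w wnz] by blast
  moreover have "A * (c \<cdot>\<^sub>m w) = 0\<^sub>m m 1" "mat_adjoint V * (c \<cdot>\<^sub>m w) = 0\<^sub>m k 1"
    using mult_smult_distrib[OF A w, of c] mult_smult_distrib[OF mat_adjoint_carrier[OF V] w, of c] Aw Vw
    by auto
  ultimately show ?thesis using w by (intro bexI[of _ "c \<cdot>\<^sub>m w"]) auto
qed

lemma orthonormal_append_col:
  assumes V: "(V::complex mat) \<in> carrier_mat n k" and VV: "mat_adjoint V * V = 1\<^sub>m k"
    and q: "q \<in> carrier_mat n 1" and qq: "mat_adjoint q * q = 1\<^sub>m 1" and Vq: "mat_adjoint V * q = 0\<^sub>m k 1"
    and W: "W = mat n (Suc k) (\<lambda>(i,j). if j < k then V $$ (i,j) else q $$ (i,0))"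
  shows "mat_adjoint W * W = 1\<^sub>m (Suc k)"
proof (rule eq_matI)
  have W': "W \<in> carrier_mat n (Suc k)" unfolding W by simp
  have gram: "(\<Sum>i<n. cnj (X $$ (i,a)) * Y $$ (i,b)) = (mat_adjoint X * Y) $$ (a,b)"
    if "X \<in> carrier_mat n p" "Y \<in> carrier_mat n p'" "a < p" "b < p'" for X Y p p' a b
    using index_adjoint_mult_sum[OF that] by simp
  have qV: "mat_adjoint q * V = 0\<^sub>m 1 k"
    using mat_adjoint_mult[OF mat_adjoint_carrier[OF V] q] Vq by simp
  fix a b assume "a < dim_row (1\<^sub>m (Suc k) :: complex mat)" "b < dim_col (1\<^sub>m (Suc k) :: complex mat)"
  then have ab: "a < Suc k" "b < Suc k" by auto
  have e: "(mat_adjoint W * W) $$ (a,b) = (\<Sum>i<n. cnj (W $$ (i,a)) * W $$ (i,b))"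
    using ab by (subst index_adjoint_mult_sum[OF W' W']) auto
  consider "a < k" "b < k" | "a < k" "b = k" | "a = k" "b < k" | "a = k" "b = k"
    using ab by linarith
  then show "(mat_adjoint W * W) $$ (a,b) = 1\<^sub>m (Suc k) $$ (a,b)"
  proof cases
    case 1 then show ?thesis using e gram[OF V V, of a b] VV by (simp add: W)
  next
    case 2 then show ?thesis using e gram[OF V q, of a 0] Vq by (simp add: W)
  next
    case 3 then show ?thesis using e gram[OF q V, of 0 b] qV by (simp add: W)
  next
    case 4 then show ?thesis using e gram[OF q q, of 0 0] qq by (simp add: W)
  qed
qed (use assms in auto)

lemma orthonormal_kernel_basis:
  assumes A: "(A::complex mat) \<in> carrier_mat m n" and mk: "m + k \<le> n"
  shows "\<exists>V\<in>carrier_mat n k. mat_adjoint V * V = 1\<^sub>m k \<and> A * V = 0\<^sub>m m k"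
  using mk
proof (induction k)
  case 0
  have "mat_adjoint (0\<^sub>m n 0) * 0\<^sub>m n 0 = (1\<^sub>m 0 :: complex mat)" by (rule eq_matI) auto
  moreover have "A * 0\<^sub>m n 0 = 0\<^sub>m m 0" using A by (intro eq_matI) auto
  ultimately show ?case by (intro bexI[of _ "0\<^sub>m n 0"]) auto
next
  case (Suc k)
  then obtain V where V: "V \<in> carrier_mat n k" and VV: "mat_adjoint V * V = 1\<^sub>m k" and AV: "A * V = 0\<^sub>m m k"
    by auto
  obtain q where q: "q \<in> carrier_mat n 1" and qq: "mat_adjoint q * q = 1\<^sub>m 1"
    and Aq: "A * q = 0\<^sub>m m 1" and Vq: "mat_adjoint V * q = 0\<^sub>m k 1"
    using orthonormal_complement_col[OF A V] Suc.prems by auto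
  define W where "W = mat n (Suc k) (\<lambda>(i,j). if j < k then V $$ (i,j) else q $$ (i,0))"
  have W: "W \<in> carrier_mat n (Suc k)" unfolding W_def by simp
  have "A * W = 0\<^sub>m m (Suc k)"
  proof (rule eq_matI)
    fix i b assume "i < dim_row (0\<^sub>m m (Suc k) :: complex mat)" "b < dim_col (0\<^sub>m m (Suc k) :: complex mat)"
    then have ib: "i < m" "b < Suc k" by auto
    have "(A * W) $$ (i,b) = (\<Sum>j<n. A $$ (i,j) * W $$ (j,b))"
      using ib by (subst index_mult_sum[OF A W]) auto
    also have "\<dots> = (if b < k then (A * V) $$ (i,b) else (A * q) $$ (i,0))"
      using ib by (simp add: index_mult_sum[OF A V] index_mult_sum[OF A q] W_def)
    finally have "(A * W) $$ (i,b) = (if b < k then (A * V) $$ (i,b) else (A * q) $$ (i,0))" .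
    then show "(A * W) $$ (i,b) = 0\<^sub>m m (Suc k) $$ (i,b)" using ib AV Aq by simp
  qed (use A W in auto)
  with W orthonormal_append_col[OF V VV q qq Vq W_def] show ?case by blast
qed

lemma orthonormal_cols_join:
  assumes V: "(V::complex mat) \<in> carrier_mat n k" and VV: "mat_adjoint V * V = 1\<^sub>m k"
    and Q: "Q \<in> carrier_mat n m" and QQ: "mat_adjoint Q * Q = 1\<^sub>m m"
    and VQ: "mat_adjoint V * Q = 0\<^sub>m k m" and km: "k + m = n"
  shows "four_block_mat V Q (0\<^sub>m 0 k) (0\<^sub>m 0 m) \<in> carrier_mat n n"
    "mat_adjoint (four_block_mat V Q (0\<^sub>m 0 k) (0\<^sub>m 0 m)) * four_block_mat V Q (0\<^sub>m 0 k) (0\<^sub>m 0 m) = 1\<^sub>m n"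
proof -
  have aV: "mat_adjoint V \<in> carrier_mat k n" using V by simp
  have aQ: "mat_adjoint Q \<in> carrier_mat m n" using Q by simp
  have QV: "mat_adjoint Q * V = 0\<^sub>m m k" using mat_adjoint_mult[OF aV Q] VQ by simp
  have z1: "(0\<^sub>m 0 k :: complex mat) \<in> carrier_mat 0 k" and z2: "(0\<^sub>m 0 m :: complex mat) \<in> carrier_mat 0 m"
    and z3: "(0\<^sub>m k 0 :: complex mat) \<in> carrier_mat k 0" and z4: "(0\<^sub>m m 0 :: complex mat) \<in> carrier_mat m 0"
    by simp_all
  have "four_block_mat V Q (0\<^sub>m 0 k) (0\<^sub>m 0 m) \<in> carrier_mat (n + 0) (k + m)" using V z2 by (rule four_block_carrier_mat)
  then show "four_block_mat V Q (0\<^sub>m 0 k) (0\<^sub>m 0 m) \<in> carrier_mat n n" using km by simp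
  have "mat_adjoint (four_block_mat V Q (0\<^sub>m 0 k) (0\<^sub>m 0 m)) * four_block_mat V Q (0\<^sub>m 0 k) (0\<^sub>m 0 m)
    = four_block_mat (mat_adjoint V * V + 0\<^sub>m k 0 * 0\<^sub>m 0 k) (mat_adjoint V * Q + 0\<^sub>m k 0 * 0\<^sub>m 0 m)
        (mat_adjoint Q * V + 0\<^sub>m m 0 * 0\<^sub>m 0 k) (mat_adjoint Q * Q + 0\<^sub>m m 0 * 0\<^sub>m 0 m)"
    unfolding mat_adjoint_four_block[OF V Q z1 z2] mat_adjoint_zero by (rule mult_four_block_mat[OF aV z3 aQ z4 V Q z1 z2])
  also have "\<dots> = 1\<^sub>m n" using VV VQ QV QQ km by simp
  finally show "mat_adjoint (four_block_mat V Q (0\<^sub>m 0 k) (0\<^sub>m 0 m)) * four_block_mat V Q (0\<^sub>m 0 k) (0\<^sub>m 0 m) = 1\<^sub>m n" .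
qed

lemma orthonormal_complement_resolution:
  assumes V: "(V::complex mat) \<in> carrier_mat n k" and VV: "mat_adjoint V * V = 1\<^sub>m k"
    and Q: "Q \<in> carrier_mat n m" and QQ: "mat_adjoint Q * Q = 1\<^sub>m m"
    and VQ: "mat_adjoint V * Q = 0\<^sub>m k m" and km: "k + m = n"
  shows "V * mat_adjoint V + Q * mat_adjoint Q = 1\<^sub>m n"
proof -
  define U where "U = four_block_mat V Q (0\<^sub>m 0 k) (0\<^sub>m 0 m)"
  note U = orthonormal_cols_join[OF V VV Q QQ VQ km, folded U_def]
  have aV: "mat_adjoint V \<in> carrier_mat k n" using V by simp
  have aQ: "mat_adjoint Q \<in> carrier_mat m n" using Q by simp
  have z1: "(0\<^sub>m 0 k :: complex mat) \<in> carrier_mat 0 k" and z2: "(0\<^sub>m 0 m :: complex mat) \<in> carrier_mat 0 m"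
    and z3: "(0\<^sub>m k 0 :: complex mat) \<in> carrier_mat k 0" and z4: "(0\<^sub>m m 0 :: complex mat) \<in> carrier_mat m 0"
    by simp_all
  have "U * mat_adjoint U = four_block_mat (V * mat_adjoint V + Q * mat_adjoint Q) (V * 0\<^sub>m k 0 + Q * 0\<^sub>m m 0)
    (0\<^sub>m 0 k * mat_adjoint V + 0\<^sub>m 0 m * mat_adjoint Q) (0\<^sub>m 0 k * 0\<^sub>m k 0 + 0\<^sub>m 0 m * 0\<^sub>m m 0)"
    unfolding U_def mat_adjoint_four_block[OF V Q z1 z2] mat_adjoint_zero by (rule mult_four_block_mat[OF V Q z1 z2 aV z3 aQ z4])
  also have "\<dots> = V * mat_adjoint V + Q * mat_adjoint Q"
    by (rule eq_matI, use V Q in auto)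
  finally show ?thesis using unitary_right_inverse[OF U] by simp
qed

lemma (in vec_space) maximal_lin_indpt_span:
  assumes S: "maximal S (\<lambda>T. T \<subseteq> X \<and> lin_indpt T)" and X: "X \<subseteq> carrier_vec n" and c: "c \<in> X"
  shows "c \<in> span S"
proof (rule ccontr)
  assume nc: "c \<notin> span S"
  have SX: "S \<subseteq> X" and Sind: "lin_indpt S" using S unfolding maximal_def by auto
  have SC: "S \<subseteq> carrier_vec n" using SX X by blast
  have cS: "c \<notin> S" using nc in_own_span[OF SC] by blast
  have "lin_indpt (S \<union> {c})" using lin_dep_iff_in_span[OF _ Sind _ cS] SC X c nc by auto
  moreover have "S \<union> {c} \<subseteq> X" using SX c by blast
  ultimately have "S \<union> {c} = S" using S unfolding maximal_def by blast
  with cS show False by blast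
qed

lemma (in vec_space) mat_factor_through_cols:
  assumes A: "A \<in> carrier_mat n L" and bs: "set bs \<subseteq> carrier_vec n"
    and span: "\<And>j. j < L \<Longrightarrow> col A j \<in> span_list bs"
  shows "\<exists>C \<in> carrier_mat (length bs) L. A = mat_of_cols n bs * C"
proof -
  define B where "B = mat_of_cols n bs"
  have Bc: "B \<in> carrier_mat n (length bs)" unfolding B_def by simp
  have "\<exists>f. col A j = B *\<^sub>v vec (length bs) f" if j: "j < L" for j
  proof -
    obtain f where "col A j = lincomb_list f bs" using span[OF j] unfolding span_list_def by blast
    also have "\<dots> = B *\<^sub>v vec (length bs) f" unfolding B_def
      by (rule lincomb_list_as_mat_mult) (use bs in auto)
    finally show ?thesis by blast
  qed
  then obtain fs where fs: "\<And>j. j < L \<Longrightarrow> col A j = B *\<^sub>v vec (length bs) (fs j)" by metis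
  define C where "C = mat (length bs) L (\<lambda>(i,j). fs j i)"
  have Cc: "C \<in> carrier_mat (length bs) L" unfolding C_def by simp
  have "A = B * C"
  proof (rule eq_matI)
    fix i j assume "i < dim_row (B * C)" "j < dim_col (B * C)"
    then have ij: "i < n" "j < L" using Bc Cc by auto
    have "col C j = vec (length bs) (fs j)" unfolding C_def using ij by (auto simp: col_def)
    then have "(B * C) $$ (i,j) = row B i \<bullet> vec (length bs) (fs j)" using ij Bc Cc by simp
    also have "\<dots> = col A j $ i" using fs[OF ij(2)] ij Bc by simp
    finally show "A $$ (i,j) = (B * C) $$ (i,j)" using ij A by simp
  qed (use A Bc Cc in auto)
  then show ?thesis using Cc unfolding B_def by blast
qed

lemma rank_factorization: assumes A: "(A::complex mat) \<in> carrier_mat M L"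
  shows "\<exists>B C. B \<in> carrier_mat M (vec_space.rank M A) \<and> C \<in> carrier_mat (vec_space.rank M A) L \<and> A = B * C
    \<and> vec_space.rank M A \<le> L"
proof -
  interpret vs: vec_space "TYPE(complex)" M .
  obtain S where S: "maximal S (\<lambda>T. T \<subseteq> set (cols A) \<and> vs.lin_indpt T)"
    using maximal_exists[of "(\<lambda>T. T \<subseteq> set (cols A) \<and> vs.lin_indpt T)" "card (set (cols A))" "{}"]
    by (meson List.finite_set card_mono empty_iff empty_subsetI vs.finite_lin_indpt2 rev_finite_subset)
  have colsC: "set (cols A) \<subseteq> carrier_vec M" using A by (auto simp: cols_def)
  have SA: "S \<subseteq> set (cols A)" using S unfolding maximal_def by auto
  obtain bs where bs: "set bs = S" "distinct bs" using finite_distinct_list[OF finite_subset[OF SA]] by blast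
  have lbs: "length bs = vs.rank A" using vs.rank_card_indpt[OF A S] bs distinct_card by fastforce
  have "col A j \<in> vs.span_list bs" if "j < L" for j
  proof -
    have "col A j \<in> set (cols A)" using A that by (simp add: cols_def)
    then have "col A j \<in> vs.span (set bs)" using vs.maximal_lin_indpt_span[OF S colsC] bs by simp
    then show ?thesis using vs.span_list_as_span[of bs] bs SA colsC by auto
  qed
  then obtain C where "C \<in> carrier_mat (length bs) L" "A = mat_of_cols M bs * C"
    using vs.mat_factor_through_cols[OF A] bs SA colsC by blast
  moreover have "mat_of_cols M bs \<in> carrier_mat M (length bs)" by simp
  ultimately show ?thesis using lbs vs.rank_le_nc[OF A] by metis
qed

lemma orthonormal_row_space_basis: assumes A: "(A::complex mat) \<in> carrier_mat M L"
  shows "\<exists>Q\<in>carrier_mat L (vec_space.rank M A). mat_adjoint Q * Q = 1\<^sub>m (vec_space.rank M A) \<and> A * Q * mat_adjoint Q = A"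
proof -
  define r where "r = vec_space.rank M A"
  obtain B C where B: "B \<in> carrier_mat M r" and C: "C \<in> carrier_mat r L" and ABC: "A = B * C" and rL: "r \<le> L"
    using rank_factorization[OF A] unfolding r_def by blast
  obtain V where V: "V \<in> carrier_mat L (L - r)" and VV: "mat_adjoint V * V = 1\<^sub>m (L - r)" and CV: "C * V = 0\<^sub>m r (L - r)"
    using orthonormal_kernel_basis[OF C, of "L - r"] rL by auto
  have aV: "mat_adjoint V \<in> carrier_mat (L - r) L" using V by simp
  obtain Q where Q: "Q \<in> carrier_mat L r" and QQ: "mat_adjoint Q * Q = 1\<^sub>m r" and VQ: "mat_adjoint V * Q = 0\<^sub>m (L - r) r"
    using orthonormal_kernel_basis[OF aV, of r] rL by auto
  have aQ: "mat_adjoint Q \<in> carrier_mat r L" using Q by simp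
  have sumI: "V * mat_adjoint V + Q * mat_adjoint Q = 1\<^sub>m L"
    by (rule orthonormal_complement_resolution[OF V VV Q QQ VQ]) (use rL in simp)
  have QQa: "Q * mat_adjoint Q = 1\<^sub>m L - V * mat_adjoint V"
  proof (rule eq_matI)
    fix i j assume ij: "i < dim_row (1\<^sub>m L - V * mat_adjoint V)" "j < dim_col (1\<^sub>m L - V * mat_adjoint V)"
    have "(V * mat_adjoint V + Q * mat_adjoint Q) $$ (i,j) = 1\<^sub>m L $$ (i,j)" using sumI by simp
    then show "(Q * mat_adjoint Q) $$ (i,j) = (1\<^sub>m L - V * mat_adjoint V) $$ (i,j)"
      using ij V Q by (auto simp: algebra_simps)
  qed (use V Q in auto)
  have AV: "A * V = 0\<^sub>m M (L - r)" unfolding ABC using assoc_mult_mat[OF B C V] CV right_mult_zero_mat[OF B] by simp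
  have "A * Q * mat_adjoint Q = A * 1\<^sub>m L - A * (V * mat_adjoint V)"
    unfolding assoc_mult_mat[OF A Q aQ] QQa by (rule mult_minus_distrib_mat[OF A one_carrier_mat mult_carrier_mat[OF V aV]])
  also have "A * (V * mat_adjoint V) = 0\<^sub>m M L"
    using assoc_mult_mat[OF A V aV] AV left_mult_zero_mat[OF aV] by simp
  finally show ?thesis using Q QQ A minus_zero_mat_right[OF A] unfolding r_def by (intro bexI[of _ Q]) simp_all
qed

section \<open>The spectral theorem for Hermitian matrices\<close>

lemma eigenvector_block_decomposition: assumes A: "(A::complex mat) \<in> carrier_mat n n" and Ah: "mat_adjoint A = A"
  and u: "u \<in> carrier_mat n 1" and uu: "mat_adjoint u * u = 1\<^sub>m 1" and Au: "A * u = e \<cdot>\<^sub>m u"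
  and V: "V \<in> carrier_mat n n1" and VV: "mat_adjoint V * V = 1\<^sub>m n1" and uV: "mat_adjoint u * V = 0\<^sub>m 1 n1"
  and n: "n = Suc n1"
  and W: "W = four_block_mat u V (0\<^sub>m 0 1) (0\<^sub>m 0 n1)"
shows "W \<in> carrier_mat n n" "mat_adjoint W * W = 1\<^sub>m n"
  "mat_adjoint W * A * W = four_block_mat (e \<cdot>\<^sub>m 1\<^sub>m 1) (0\<^sub>m 1 n1) (0\<^sub>m n1 1) (mat_adjoint V * A * V)"
proof -
  have au: "mat_adjoint u \<in> carrier_mat 1 n" using u by simp
  have aV: "mat_adjoint V \<in> carrier_mat n1 n" using V by simp
  have z01: "(0\<^sub>m 0 1 :: complex mat) \<in> carrier_mat 0 1" by simp
  have z0n: "(0\<^sub>m 0 n1 :: complex mat) \<in> carrier_mat 0 n1" by simp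
  have z10: "(0\<^sub>m 1 0 :: complex mat) \<in> carrier_mat 1 0" by simp
  have zn0: "(0\<^sub>m n1 0 :: complex mat) \<in> carrier_mat n1 0" by simp
  note Wu = orthonormal_cols_join[OF u uu V VV uV, folded W]
  show Wc': "W \<in> carrier_mat n n" and "mat_adjoint W * W = 1\<^sub>m n" using Wu n by simp_all
  have aW: "mat_adjoint W = four_block_mat (mat_adjoint u) (0\<^sub>m 1 0) (mat_adjoint V) (0\<^sub>m n1 0)"
    unfolding W using mat_adjoint_four_block[OF u V z01 z0n] by simp
  have Vu: "mat_adjoint V * u = 0\<^sub>m n1 1" using mat_adjoint_mult[OF au V] uV by simp
  have Ablk: "A = four_block_mat A (0\<^sub>m n 0) (0\<^sub>m 0 n) (0\<^sub>m 0 0)"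
    by (rule eq_matI, use A in auto)
  have "A * W = four_block_mat (A * u + 0\<^sub>m n 0 * 0\<^sub>m 0 1) (A * V + 0\<^sub>m n 0 * 0\<^sub>m 0 n1)
     (0\<^sub>m 0 n * u + 0\<^sub>m 0 0 * 0\<^sub>m 0 1) (0\<^sub>m 0 n * V + 0\<^sub>m 0 0 * 0\<^sub>m 0 n1)"
    unfolding W by (subst Ablk, rule mult_four_block_mat[OF A _ _ _ u V z01 z0n], auto)
  also have "\<dots> = four_block_mat (A * u) (A * V) (0\<^sub>m 0 1) (0\<^sub>m 0 n1)"
    using A u V by simp
  finally have AW: "A * W = four_block_mat (A * u) (A * V) (0\<^sub>m 0 1) (0\<^sub>m 0 n1)" .
  have Auc: "A * u \<in> carrier_mat n 1" using A u by simp
  have AVc: "A * V \<in> carrier_mat n n1" using A V by simp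
  have "mat_adjoint W * A * W = mat_adjoint W * (A * W)"
    using assoc_mult_mat[OF mat_adjoint_carrier[OF Wc'] A Wc'] .
  also have "\<dots> = four_block_mat (mat_adjoint u * (A * u) + 0\<^sub>m 1 0 * 0\<^sub>m 0 1) (mat_adjoint u * (A * V) + 0\<^sub>m 1 0 * 0\<^sub>m 0 n1)
     (mat_adjoint V * (A * u) + 0\<^sub>m n1 0 * 0\<^sub>m 0 1) (mat_adjoint V * (A * V) + 0\<^sub>m n1 0 * 0\<^sub>m 0 n1)"
    by (simp only: aW AW, rule mult_four_block_mat[OF au z10 aV zn0 Auc AVc z01 z0n])
  also have "\<dots> = four_block_mat (mat_adjoint u * (A * u)) (mat_adjoint u * (A * V))
     (mat_adjoint V * (A * u)) (mat_adjoint V * (A * V))"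
    using au aV Auc AVc by simp
  also have "mat_adjoint u * (A * u) = e \<cdot>\<^sub>m 1\<^sub>m 1"
    unfolding Au using mult_smult_distrib[OF au u] uu by simp
  also have "mat_adjoint V * (A * u) = 0\<^sub>m n1 1"
    unfolding Au using mult_smult_distrib[OF aV u] Vu by simp
  also have "mat_adjoint u * (A * V) = 0\<^sub>m 1 n1"
  proof -
    have "mat_adjoint u * (A * V) = (mat_adjoint u * A) * V" using assoc_mult_mat[OF au A V] by simp
    also have "mat_adjoint u * A = mat_adjoint (A * u)" using mat_adjoint_mult[OF A u] Ah by simp
    also have "\<dots> = cnj e \<cdot>\<^sub>m mat_adjoint u" unfolding Au mat_adjoint_smult ..
    also have "\<dots> * V = cnj e \<cdot>\<^sub>m (mat_adjoint u * V)" using mult_smult_assoc_mat[OF au V] .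
    finally show ?thesis using uV by simp
  qed
  also have "mat_adjoint V * (A * V) = mat_adjoint V * A * V" using assoc_mult_mat[OF aV A V] by simp
  finally show "mat_adjoint W * A * W = four_block_mat (e \<cdot>\<^sub>m 1\<^sub>m 1) (0\<^sub>m 1 n1) (0\<^sub>m n1 1) (mat_adjoint V * A * V)" .
qed

lemma char_poly_scalar_one: "char_poly (e \<cdot>\<^sub>m 1\<^sub>m 1 :: complex mat) = [:- e, 1:]"
proof -
  have "e \<cdot>\<^sub>m 1\<^sub>m 1 = mat 1 1 (\<lambda>_. e)" by (rule eq_matI) auto
  then show ?thesis by (simp add: char_poly_defs det_def sign_def)
qed

lemma unit_eigenvector_col:
  assumes A: "(A::complex mat) \<in> carrier_mat n n" and e: "eigenvalue A e"
  shows "\<exists>u\<in>carrier_mat n 1. mat_adjoint u * u = 1\<^sub>m 1 \<and> A * u = e \<cdot>\<^sub>m u"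
proof -
  from find_eigenvector[OF A e] obtain v where "eigenvector A v e" by blast
  then have v: "v \<in> carrier_vec n" "v \<noteq> 0\<^sub>v n" "A *\<^sub>v v = e \<cdot>\<^sub>v v"
    unfolding eigenvector_def using A by auto
  define w where "w = col_of n (\<lambda>i. v $ i)"
  have w: "w \<in> carrier_mat n 1" unfolding w_def by simp
  have wnz: "w \<noteq> 0\<^sub>m n 1"
  proof
    assume "w = 0\<^sub>m n 1"
    moreover have "\<And>i. i < n \<Longrightarrow> v $ i = w $$ (i,0)" by (simp add: w_def)
    ultimately have "\<forall>i<n. v $ i = 0" by simp
    then have "v = 0\<^sub>v n" using v by (intro eq_vecI) auto
    with v show False by simp
  qed
  have Aw: "A * w = e \<cdot>\<^sub>m w"
  proof (rule eq_matI)
    fix i j assume "i < dim_row (e \<cdot>\<^sub>m w)" "j < dim_col (e \<cdot>\<^sub>m w)"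
    then have ij: "i < n" "j = 0" using w by auto
    have "(A * w) $$ (i,j) = (A *\<^sub>v v) $ i"
      using A v(1) ij by (subst index_mult_sum[OF A w], auto simp: w_def mult_mat_vec_def scalar_prod_def atLeast0LessThan)
    also have "\<dots> = (e \<cdot>\<^sub>m w) $$ (i,j)" using v(1,3) ij w by (simp add: w_def col_of_def)
    finally show "(A * w) $$ (i,j) = (e \<cdot>\<^sub>m w) $$ (i,j)" .
  qed (use A w in auto)
  obtain c where cu: "mat_adjoint (c \<cdot>\<^sub>m w) * (c \<cdot>\<^sub>m w) = 1\<^sub>m 1" using normalize_col[OF w wnz] by blast
  have "A * (c \<cdot>\<^sub>m w) = c \<cdot>\<^sub>m (e \<cdot>\<^sub>m w)" using mult_smult_distrib[OF A w, of c] Aw by simp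
  also have "\<dots> = e \<cdot>\<^sub>m (c \<cdot>\<^sub>m w)" by (rule eq_matI) auto
  finally show ?thesis using cu w by (intro bexI[of _ "c \<cdot>\<^sub>m w"]) auto
qed

lemma unitary_block_diag_extend:
  assumes A: "(A::complex mat) \<in> carrier_mat n n" and n: "n = Suc n1"
    and W: "W \<in> carrier_mat n n" "mat_adjoint W * W = 1\<^sub>m n"
    and WAW: "mat_adjoint W * A * W = four_block_mat (e \<cdot>\<^sub>m 1\<^sub>m 1) (0\<^sub>m 1 n1) (0\<^sub>m n1 1) A3"
    and A3: "A3 \<in> carrier_mat n1 n1"
    and P3: "P3 \<in> carrier_mat n1 n1" "mat_adjoint P3 * P3 = 1\<^sub>m n1"
    and P3d: "mat_adjoint P3 * A3 * P3 = diag_of n1 (\<lambda>i. es ! i)"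
  shows "\<exists>P\<in>carrier_mat n n. mat_adjoint P * P = 1\<^sub>m n \<and> mat_adjoint P * A * P = diag_of n (\<lambda>i. (e # es) ! i)"
proof -
  have aP3: "mat_adjoint P3 \<in> carrier_mat n1 n1" using P3 by simp
  have o1: "(1\<^sub>m 1 :: complex mat) \<in> carrier_mat 1 1" by simp
  have E: "e \<cdot>\<^sub>m 1\<^sub>m 1 \<in> carrier_mat 1 1" by simp
  have z1: "(0\<^sub>m 1 n1 :: complex mat) \<in> carrier_mat 1 n1" by simp
  have z2: "(0\<^sub>m n1 1 :: complex mat) \<in> carrier_mat n1 1" by simp
  define Q where "Q = four_block_mat (1\<^sub>m 1) (0\<^sub>m 1 n1) (0\<^sub>m n1 1) P3"
  have Q: "Q \<in> carrier_mat n n" unfolding Q_def using four_block_carrier_mat[OF o1 P3(1)] n by simp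
  have aQ: "mat_adjoint Q = four_block_mat (1\<^sub>m 1) (0\<^sub>m 1 n1) (0\<^sub>m n1 1) (mat_adjoint P3)"
    unfolding Q_def using mat_adjoint_four_block[OF o1 z1 z2 P3(1)] by simp
  have aQc: "mat_adjoint Q \<in> carrier_mat n n" using Q by simp
  have aW: "mat_adjoint W \<in> carrier_mat n n" using W by simp
  have aP: "mat_adjoint (W * Q) = mat_adjoint Q * mat_adjoint W" by (rule mat_adjoint_mult[OF W(1) Q])
  have "mat_adjoint (W * Q) * (W * Q) = mat_adjoint Q * (mat_adjoint W * W * 1\<^sub>m n) * Q"
    unfolding aP using assoc_mult_mat5[OF aQc aW one_carrier_mat W(1) Q] W aW by simp
  also have "\<dots> = mat_adjoint Q * Q" using W(2) right_mult_one_mat[OF aQc] by simp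
  also have "\<dots> = four_block_mat (1\<^sub>m 1 * 1\<^sub>m 1 + 0\<^sub>m 1 n1 * 0\<^sub>m n1 1) (1\<^sub>m 1 * 0\<^sub>m 1 n1 + 0\<^sub>m 1 n1 * P3)
     (0\<^sub>m n1 1 * 1\<^sub>m 1 + mat_adjoint P3 * 0\<^sub>m n1 1) (0\<^sub>m n1 1 * 0\<^sub>m 1 n1 + mat_adjoint P3 * P3)"
    by (simp only: aQ, simp only: Q_def, rule mult_four_block_mat[OF o1 z1 z2 aP3 o1 z1 z2 P3(1)])
  also have "\<dots> = 1\<^sub>m n"
    using P3 aP3 right_mult_zero_mat[OF aP3, of 1] left_mult_zero_mat[OF P3(1), of 1] n by simp
  finally have Pu: "mat_adjoint (W * Q) * (W * Q) = 1\<^sub>m n" .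
  have "mat_adjoint (W * Q) * A * (W * Q) = mat_adjoint Q * (mat_adjoint W * A * W) * Q"
    unfolding aP by (rule assoc_mult_mat5[OF aQc aW A W(1) Q])
  also have "mat_adjoint Q * (mat_adjoint W * A * W) = four_block_mat (1\<^sub>m 1 * (e \<cdot>\<^sub>m 1\<^sub>m 1) + 0\<^sub>m 1 n1 * 0\<^sub>m n1 1) (1\<^sub>m 1 * 0\<^sub>m 1 n1 + 0\<^sub>m 1 n1 * A3)
     (0\<^sub>m n1 1 * (e \<cdot>\<^sub>m 1\<^sub>m 1) + mat_adjoint P3 * 0\<^sub>m n1 1) (0\<^sub>m n1 1 * 0\<^sub>m 1 n1 + mat_adjoint P3 * A3)"
    unfolding aQ WAW by (rule mult_four_block_mat[OF o1 z1 z2 aP3 E z1 z2 A3])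
  also have "\<dots> = four_block_mat (e \<cdot>\<^sub>m 1\<^sub>m 1) (0\<^sub>m 1 n1) (0\<^sub>m n1 1) (mat_adjoint P3 * A3)"
    using A3 aP3 E right_mult_zero_mat[OF aP3, of 1] left_mult_zero_mat[OF A3, of 1] left_mult_zero_mat[OF E, of n1] by simp
  also have "\<dots> * Q = four_block_mat ((e \<cdot>\<^sub>m 1\<^sub>m 1) * 1\<^sub>m 1 + 0\<^sub>m 1 n1 * 0\<^sub>m n1 1) ((e \<cdot>\<^sub>m 1\<^sub>m 1) * 0\<^sub>m 1 n1 + 0\<^sub>m 1 n1 * P3)
     (0\<^sub>m n1 1 * 1\<^sub>m 1 + (mat_adjoint P3 * A3) * 0\<^sub>m n1 1) (0\<^sub>m n1 1 * 0\<^sub>m 1 n1 + (mat_adjoint P3 * A3) * P3)"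
    unfolding Q_def by (rule mult_four_block_mat[OF E z1 z2 mult_carrier_mat[OF aP3 A3] o1 z1 z2 P3(1)])
  also have "\<dots> = four_block_mat (e \<cdot>\<^sub>m 1\<^sub>m 1) (0\<^sub>m 1 n1) (0\<^sub>m n1 1) (diag_of n1 (\<lambda>i. es ! i))"
    using A3 aP3 E P3 P3d right_mult_zero_mat[OF mult_carrier_mat[OF aP3 A3], of 1] left_mult_zero_mat[OF P3(1), of 1]
      right_mult_zero_mat[OF E, of n1] by simp
  also have "\<dots> = diag_of n (\<lambda>i. (e # es) ! i)"
    by (rule eq_matI, auto simp: diag_of_def n)
  finally show ?thesis using W(1) Q Pu by (intro bexI[of _ "W * Q"]) auto
qed

lemma hermitian_unitary_diagonalization:
  assumes "(A::complex mat) \<in> carrier_mat n n" "mat_adjoint A = A" "char_poly A = (\<Prod>e\<leftarrow>es. [:- e, 1:])"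
  shows "\<exists>P\<in>carrier_mat n n. mat_adjoint P * P = 1\<^sub>m n \<and> mat_adjoint P * A * P = diag_of n (\<lambda>i. es ! i)"
  using assms
proof (induction es arbitrary: n A)
  case Nil
  have "degree (char_poly A) = n" using degree_monic_char_poly[OF Nil(1)] by simp
  then have n: "n = 0" using Nil(3) by simp
  have "mat_adjoint (1\<^sub>m n) * A * 1\<^sub>m n = diag_of n (\<lambda>i. [] ! i)"
    using Nil(1) n by (intro eq_matI) (auto simp: diag_of_def)
  then show ?case by (intro bexI[of _ "1\<^sub>m n"]) auto
next
  case (Cons e es n A)
  note A = Cons(2) and Ah = Cons(3)
  have nz: "(\<Prod>e\<leftarrow>es. [:- e, 1:]) \<noteq> 0" by (auto simp: prod_list_zero_iff)
  have ne: "[:- e, 1:] \<noteq> (0::complex poly)" by simp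
  have cp: "char_poly A = [:- e, 1:] * (\<Prod>e\<leftarrow>es. [:- e, 1:])" using Cons(4) by simp
  have "degree (char_poly A) = n" using degree_monic_char_poly[OF A] by simp
  moreover have "degree (char_poly A) = degree [:- e, 1:] + degree (\<Prod>e\<leftarrow>es. [:- e, 1:])"
    unfolding cp by (rule degree_mult_eq[OF ne nz])
  ultimately have "n = Suc (degree (\<Prod>e\<leftarrow>es. [:- e, 1:]))" by simp
  then obtain n1 where n: "n = Suc n1" by blast
  have "eigenvalue A e" using eigenvalue_root_char_poly[OF A] cp by simp
  then obtain u where u: "u \<in> carrier_mat n 1" and uu: "mat_adjoint u * u = 1\<^sub>m 1" and Au: "A * u = e \<cdot>\<^sub>m u"
    using unit_eigenvector_col[OF A] by blast
  obtain V where V: "V \<in> carrier_mat n n1" and VV: "mat_adjoint V * V = 1\<^sub>m n1" and uV: "mat_adjoint u * V = 0\<^sub>m 1 n1"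
    using orthonormal_kernel_basis[OF mat_adjoint_carrier[OF u], of n1] n by auto
  define W where "W = four_block_mat u V (0\<^sub>m 0 1) (0\<^sub>m 0 n1)"
  note W = eigenvector_block_decomposition[OF A Ah u uu Au V VV uV n W_def]
  define A3 where "A3 = mat_adjoint V * A * V"
  have A3: "A3 \<in> carrier_mat n1 n1" unfolding A3_def
    by (rule mult_carrier_mat[OF mult_carrier_mat[OF mat_adjoint_carrier[OF V] A] V])
  have A3h: "mat_adjoint A3 = A3" unfolding A3_def by (rule mat_adjoint_hermitian_sandwich[OF A Ah V])
  have sim: "similar_mat (mat_adjoint W * A * W) A"
    by (rule similar_matI[where n=n and P="mat_adjoint W" and Q=W],
        use W A unitary_right_inverse[OF W(1,2)] mult_carrier_mat[OF mult_carrier_mat[OF mat_adjoint_carrier[OF W(1)] A] W(1)] in auto)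
  have "char_poly A = char_poly (mat_adjoint W * A * W)" using char_poly_similar[OF sim] by simp
  also have "\<dots> = char_poly (e \<cdot>\<^sub>m 1\<^sub>m 1) * char_poly A3"
    unfolding W(3) A3_def[symmetric] by (rule char_poly_four_block_zeros_col[OF _ _ A3]) auto
  finally have "char_poly A = char_poly (e \<cdot>\<^sub>m 1\<^sub>m 1) * char_poly A3" .
  then have "[:- e, 1:] * char_poly A3 = [:- e, 1:] * (\<Prod>e\<leftarrow>es. [:- e, 1:])"
    using cp char_poly_scalar_one by simp
  then have "char_poly A3 = (\<Prod>e\<leftarrow>es. [:- e, 1:])" using mult_left_cancel[OF ne] by blast
  then obtain P3 where "P3 \<in> carrier_mat n1 n1" "mat_adjoint P3 * P3 = 1\<^sub>m n1"
    "mat_adjoint P3 * A3 * P3 = diag_of n1 (\<lambda>i. es ! i)"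
    using Cons.IH[OF A3 A3h] by blast
  from unitary_block_diag_extend[OF A n W(1,2) W(3)[folded A3_def] A3 this] show ?case .
qed

lemma prod_linear_factors_list: "(\<Prod>k<M. [:- complex_of_real (\<sigma> k), 1:]) = (\<Prod>e\<leftarrow>map (\<lambda>i. complex_of_real (\<sigma> i)) [0..<M]. [:- e, 1:])"
proof -
  have "(\<Prod>k<M. [:- complex_of_real (\<sigma> k), 1:]) = (\<Prod>k\<in>set [0..<M]. [:- complex_of_real (\<sigma> k), 1:])"
    by (simp add: atLeast0LessThan)
  also have "\<dots> = prod_list (map (\<lambda>k. [:- complex_of_real (\<sigma> k), 1:]) [0..<M])"
    by (rule prod.distinct_set_conv_list) simp
  finally show ?thesis by (simp add: o_def)
qed

lemma mtrace_eq_sum_eigenvalues: assumes Z: "(Z::complex mat) \<in> carrier_mat N N" and Zh: "mat_adjoint Z = Z"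
  and cp: "char_poly Z = (\<Prod>k<N. [:- complex_of_real (\<sigma> k), 1:])"
  shows "mtrace Z = of_real (\<Sum>k<N. \<sigma> k)"
proof -
  define es where "es = map (\<lambda>i. complex_of_real (\<sigma> i)) [0..<N]"
  have cp': "char_poly Z = (\<Prod>e\<leftarrow>es. [:- e, 1:])" unfolding es_def cp by (rule prod_linear_factors_list)
  obtain P where P: "P \<in> carrier_mat N N" and PP: "mat_adjoint P * P = 1\<^sub>m N"
    and PZP: "mat_adjoint P * Z * P = diag_of N (\<lambda>i. es ! i)"
    using hermitian_unitary_diagonalization[OF Z Zh cp'] by blast
  have aP: "mat_adjoint P \<in> carrier_mat N N" using P by simp
  have "mtrace (mat_adjoint P * Z * P) = mtrace (mat_adjoint P * (Z * P))" using assoc_mult_mat[OF aP Z P] by simp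
  also have "\<dots> = mtrace ((Z * P) * mat_adjoint P)" by (rule mtrace_mult_commute[OF aP mult_carrier_mat[OF Z P]])
  also have "\<dots> = mtrace Z" using assoc_mult_mat[OF Z P aP] unitary_right_inverse[OF P PP] right_mult_one_mat[OF Z] by simp
  finally have "mtrace Z = mtrace (diag_of N (\<lambda>i. es ! i))" using PZP by simp
  also have "\<dots> = (\<Sum>k<N. of_real (\<sigma> k))" unfolding mtrace_def diag_of_def es_def by simp
  finally show ?thesis by simp
qed

lemma char_poly_gram_commute: assumes Ct: "(Ct::complex mat) \<in> carrier_mat M M" and inv: "invertible_mat Ct"
  shows "char_poly (mat_adjoint Ct * Ct) = char_poly (Ct * mat_adjoint Ct)"
proof -
  obtain Ci where Ci: "Ci \<in> carrier_mat M M" and CCi: "Ct * Ci = 1\<^sub>m M" and CiC: "Ci * Ct = 1\<^sub>m M"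
    using invertible_mat_inverse[OF inv Ct] by blast
  have aCt: "mat_adjoint Ct \<in> carrier_mat M M" using Ct by simp
  have "Ci * (Ct * mat_adjoint Ct) * Ct = (Ci * Ct) * mat_adjoint Ct * Ct"
    using assoc_mult_mat[OF Ci Ct aCt] by simp
  also have "\<dots> = mat_adjoint Ct * Ct" using CiC left_mult_one_mat[OF aCt] by simp
  finally have eq: "mat_adjoint Ct * Ct = Ci * (Ct * mat_adjoint Ct) * Ct" by simp
  have "similar_mat (mat_adjoint Ct * Ct) (Ct * mat_adjoint Ct)"
    by (rule similar_matI[where n=M and P=Ci and Q=Ct], use Ci Ct aCt CCi CiC eq in auto)
  then show ?thesis by (rule char_poly_similar)
qed

lemma mtrace_gram_eq_sum_eigenvalues:
  assumes Cr: "(Cr::complex mat) \<in> carrier_mat N N" and el: "eigenvalue_list N (Cr * mat_adjoint Cr) \<sigma>"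
  shows "mtrace (mat_adjoint Cr * Cr) = of_real (\<Sum>n<N. \<sigma> n)" "0 \<le> (\<Sum>n<N. \<sigma> n)"
proof -
  have aCr: "mat_adjoint Cr \<in> carrier_mat N N" using Cr by simp
  have tr: "mtrace (mat_adjoint Cr * Cr) = mtrace (Cr * mat_adjoint Cr)" by (rule mtrace_mult_commute[OF aCr Cr])
  have "mtrace (Cr * mat_adjoint Cr) = of_real (\<Sum>n<N. \<sigma> n)"
    using mtrace_eq_sum_eigenvalues[of "Cr * mat_adjoint Cr" N \<sigma>] mat_adjoint_mult[OF Cr aCr] Cr el
    unfolding eigenvalue_list_def by simp
  moreover have "0 \<le> Re (mtrace (Cr * mat_adjoint Cr))" by (rule mtrace_gram_nonneg[OF Cr])
  ultimately show "mtrace (mat_adjoint Cr * Cr) = of_real (\<Sum>n<N. \<sigma> n)" "0 \<le> (\<Sum>n<N. \<sigma> n)"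
    using tr by simp_all
qed

lemma pos_def_unitary_conj_diag_entry:
  assumes A: "pos_def n A" and Ah: "mat_adjoint A = A"
    and U: "U \<in> carrier_mat n n" and UU: "mat_adjoint U * U = 1\<^sub>m n" and a: "a < n"
  shows "Im ((mat_adjoint U * A * U) $$ (a,a)) = 0" "0 < Re ((mat_adjoint U * A * U) $$ (a,a))"
proof -
  have Ac: "A \<in> carrier_mat n n" using A by (simp add: pos_def_def)
  have aU: "mat_adjoint U \<in> carrier_mat n n" using U by simp
  have Ue: "U * unit_col n a \<in> carrier_mat n 1" using U by simp
  have "(mat_adjoint U * A * U) $$ (a,a) = quad_form (mat_adjoint U * A * U) (unit_col n a)"
    using quad_form_unit_col[OF mult_carrier_mat[OF mult_carrier_mat[OF aU Ac] U] a] by simp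
  also have "\<dots> = quad_form A (U * unit_col n a)" by (rule quad_form_sandwich[OF U Ac unit_col_carrier])
  finally have e: "(mat_adjoint U * A * U) $$ (a,a) = quad_form A (U * unit_col n a)" .
  have "U * unit_col n a \<noteq> 0\<^sub>m n 1"
  proof
    assume "U * unit_col n a = 0\<^sub>m n 1"
    then have "mat_adjoint U * (U * unit_col n a) = 0\<^sub>m n 1" using right_mult_zero_mat[OF aU, of 1] by simp
    moreover have "mat_adjoint U * (U * unit_col n a) = unit_col n a"
      using assoc_mult_mat[OF aU U unit_col_carrier] UU left_mult_one_mat[OF unit_col_carrier] by simp
    ultimately have "unit_col n a $$ (a,0) = 0" using a by simp
    then show False using a by (simp add: unit_col_def)
  qed
  then show "0 < Re ((mat_adjoint U * A * U) $$ (a,a))" using A Ue e unfolding pos_def_def by simp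
  show "Im ((mat_adjoint U * A * U) $$ (a,a)) = 0" unfolding e by (rule Im_quad_form_hermitian[OF Ac Ah Ue])
qed

lemma pos_def_unitary_diagonalization:
  assumes Y: "(Y::complex mat) \<in> carrier_mat n n" and Yh: "mat_adjoint Y = Y" and Yp: "pos_def n Y"
  shows "\<exists>P lam. P \<in> carrier_mat n n \<and> mat_adjoint P * P = 1\<^sub>m n
    \<and> mat_adjoint P * Y * P = diag_of n (\<lambda>i. complex_of_real (lam i)) \<and> (\<forall>i<n. 0 < lam i)"
proof -
  obtain as where "char_poly Y = (\<Prod>a\<leftarrow>as. [:- a, 1:])" using char_poly_factorized[OF Y] by blast
  then obtain P where P: "P \<in> carrier_mat n n" and PP: "mat_adjoint P * P = 1\<^sub>m n"
    and PYP: "mat_adjoint P * Y * P = diag_of n (\<lambda>i. as ! i)"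
    using hermitian_unitary_diagonalization[OF Y Yh] by blast
  have real: "as ! i = complex_of_real (Re (as ! i)) \<and> 0 < Re (as ! i)" if i: "i < n" for i
    using pos_def_unitary_conj_diag_entry[OF Yp Yh P PP i] i unfolding PYP
    by (simp add: diag_of_def complex_eq_iff)
  have "mat_adjoint P * Y * P = diag_of n (\<lambda>i. complex_of_real (Re (as ! i)))"
    unfolding PYP diag_of_def using real by (intro eq_matI) auto
  with P PP real show ?thesis by (intro exI[of _ P] exI[of _ "\<lambda>i. Re (as ! i)"]) simp
qed

lemma quad_form_kron_diagonal: assumes Kq: "(Kq::complex mat) \<in> carrier_mat L L" and D: "D \<in> carrier_mat N N"
  and Dd: "diagonal_mat D" and w: "w \<in> carrier_mat (L*N) 1"
  shows "quad_form (kron Kq D) w = (\<Sum>a<N. D $$ (a,a) * quad_form Kq (col_of L (\<lambda>i. w $$ (i*N+a, 0))))"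
proof -
  have K: "kron Kq D \<in> carrier_mat (L*N) (L*N)" using Kq D by simp
  have Dz: "\<And>a b. a < N \<Longrightarrow> b < N \<Longrightarrow> D $$ (a,b) = (if b = a then D $$ (a,a) else 0)"
    using Dd D unfolding diagonal_mat_def by auto
  have "quad_form (kron Kq D) w = (\<Sum>p<L*N. \<Sum>q<L*N. cnj (w $$ (p,0)) * kron Kq D $$ (p,q) * w $$ (q,0))"
    by (rule quad_form_sum[OF K w])
  also have "\<dots> = (\<Sum>i1<L. \<Sum>a<N. \<Sum>j1<L. \<Sum>b<N. cnj (w $$ (i1*N+a,0)) * kron Kq D $$ (i1*N+a,j1*N+b) * w $$ (j1*N+b,0))"
    by (simp add: sum_lessThan_mult)
  also have "\<dots> = (\<Sum>i1<L. \<Sum>a<N. \<Sum>j1<L. \<Sum>b<N. if b = a then cnj (w $$ (i1*N+a,0)) * (Kq $$ (i1,j1) * D $$ (a,a)) * w $$ (j1*N+a,0) else 0)"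
  proof (intro sum.cong refl)
    fix i1 a j1 b assume "i1 \<in> {..<L}" "a \<in> {..<N}" "j1 \<in> {..<L}" "b \<in> {..<N}"
    then have i: "i1 < L" "a < N" "j1 < L" "b < N" by auto
    have "kron Kq D $$ (i1*N+a,j1*N+b) = Kq $$ (i1,j1) * D $$ (a,b)"
      using index_kron_block[of i1 Kq a D j1 b] i Kq D by simp
    then show "cnj (w $$ (i1*N+a,0)) * kron Kq D $$ (i1*N+a,j1*N+b) * w $$ (j1*N+b,0) =
      (if b = a then cnj (w $$ (i1*N+a,0)) * (Kq $$ (i1,j1) * D $$ (a,a)) * w $$ (j1*N+a,0) else 0)"
      using Dz[OF i(2,4)] by auto
  qed
  also have "\<dots> = (\<Sum>i1<L. \<Sum>a<N. \<Sum>j1<L. cnj (w $$ (i1*N+a,0)) * (Kq $$ (i1,j1) * D $$ (a,a)) * w $$ (j1*N+a,0))"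
    by simp
  also have "\<dots> = (\<Sum>a<N. \<Sum>i1<L. \<Sum>j1<L. cnj (w $$ (i1*N+a,0)) * (Kq $$ (i1,j1) * D $$ (a,a)) * w $$ (j1*N+a,0))"
    by (rule sum.swap)
  also have "\<dots> = (\<Sum>a<N. D $$ (a,a) * quad_form Kq (col_of L (\<lambda>i. w $$ (i*N+a, 0))))"
  proof (intro sum.cong refl)
    fix a assume "a \<in> {..<N}"
    show "(\<Sum>i1<L. \<Sum>j1<L. cnj (w $$ (i1*N+a,0)) * (Kq $$ (i1,j1) * D $$ (a,a)) * w $$ (j1*N+a,0)) =
      D $$ (a,a) * quad_form Kq (col_of L (\<lambda>i. w $$ (i*N+a, 0)))"
      by (subst quad_form_sum[OF Kq col_of_carrier]) (simp add: sum_distrib_left mult_ac)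
  qed
  finally show ?thesis .
qed

lemma pos_def_kron_diagonal: assumes Kq: "pos_def L Kq" and D: "D \<in> carrier_mat N N"
  and Dd: "diagonal_mat D" and Dr: "\<And>a. a < N \<Longrightarrow> Im (D $$ (a,a)) = 0 \<and> 0 < Re (D $$ (a,a))"
  shows "pos_def (L*N) (kron Kq D)"
  unfolding pos_def_def
proof (intro conjI ballI impI)
  have Kqc: "Kq \<in> carrier_mat L L" using Kq by (simp add: pos_def_def)
  show "kron Kq D \<in> carrier_mat (L*N) (L*N)" using Kqc D by simp
  fix w :: "complex mat" assume w: "w \<in> carrier_mat (L*N) 1" and nz: "w \<noteq> 0\<^sub>m (L*N) 1"
  define x where "x a = col_of L (\<lambda>i. w $$ (i*N+a, 0))" for a
  have xc: "\<And>a. x a \<in> carrier_mat L 1" unfolding x_def by simp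
  have "Re (quad_form (kron Kq D) w) = (\<Sum>a<N. Re (D $$ (a,a)) * Re (quad_form Kq (x a)))"
    unfolding quad_form_kron_diagonal[OF Kqc D Dd w] x_def[symmetric] Re_sum using Dr by (intro sum.cong refl) auto
  moreover obtain p where p: "p < L*N" "w $$ (p,0) \<noteq> 0" using col_nonzero_entry[OF w nz] by blast
  define a where "a = p mod N"
  define i1 where "i1 = p div N"
  have ai: "a < N" "i1 < L" using div_mod_less_mult[OF p(1)] unfolding a_def i1_def by auto
  have pe: "p = i1 * N + a" unfolding a_def i1_def by simp
  have xnz: "x a \<noteq> 0\<^sub>m L 1"
  proof
    assume "x a = 0\<^sub>m L 1"
    then have "x a $$ (i1,0) = 0" using ai by simp
    then show False using p(2) ai pe unfolding x_def by simp
  qed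
  have pos: "0 < Re (D $$ (a,a)) * Re (quad_form Kq (x a))"
    using Dr[OF ai(1)] Kq xc[of a] xnz unfolding pos_def_def by simp
  have nn: "\<And>b. b \<in> {..<N} \<Longrightarrow> 0 \<le> Re (D $$ (b,b)) * Re (quad_form Kq (x b))"
    using Dr pos_def_pos_semidef[OF Kq] xc unfolding pos_semidef_def by (simp add: less_imp_le)
  have "0 < (\<Sum>a<N. Re (D $$ (a,a)) * Re (quad_form Kq (x a)))"
    by (rule sum_pos2[of _ a]) (use ai pos nn in auto)
  ultimately show "0 < Re (quad_form (kron Kq D) w)" by simp
qed

lemma pos_def_kron:
  assumes Kq: "pos_def L Kq" and Kr: "pos_def N Kr" and Krh: "mat_adjoint Kr = Kr"
  shows "pos_def (L*N) (kron Kq Kr)"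
proof -
  have Kqc: "Kq \<in> carrier_mat L L" using Kq by (simp add: pos_def_def)
  have Krc: "Kr \<in> carrier_mat N N" using Kr by (simp add: pos_def_def)
  obtain U lam where U: "U \<in> carrier_mat N N" and UU: "mat_adjoint U * U = 1\<^sub>m N"
    and UKU: "mat_adjoint U * Kr * U = diag_of N (\<lambda>i. complex_of_real (lam i))" and lam: "\<And>i. i < N \<Longrightarrow> 0 < lam i"
    using pos_def_unitary_diagonalization[OF Krc Krh Kr] by blast
  define D where "D = diag_of N (\<lambda>i. complex_of_real (lam i))"
  have Dc: "D \<in> carrier_mat N N" unfolding D_def by simp
  have aU: "mat_adjoint U \<in> carrier_mat N N" using U by simp
  have UaU: "U * mat_adjoint U = 1\<^sub>m N" by (rule unitary_right_inverse[OF U UU])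
  have "(U * mat_adjoint U) * Kr * (U * mat_adjoint U) = U * (mat_adjoint U * Kr * U) * mat_adjoint U"
    by (rule assoc_mult_mat5[OF U aU Krc U aU])
  then have KrD: "Kr = U * D * mat_adjoint U" using UaU Krc UKU unfolding D_def by simp
  have KD: "pos_def (L*N) (kron Kq D)"
    by (rule pos_def_kron_diagonal[OF Kq Dc]) (use lam in \<open>auto simp: D_def diag_of_def diagonal_mat_def\<close>)
  define G where "G = kron (1\<^sub>m L) U"
  have Gc: "G \<in> carrier_mat (L*N) (L*N)" unfolding G_def using U by simp
  have aG: "mat_adjoint G = kron (1\<^sub>m L) (mat_adjoint U)" unfolding G_def using mat_adjoint_kron by simp
  have GaG: "G * mat_adjoint G = 1\<^sub>m (L*N)"
  proof -
    have "G * mat_adjoint G = kron (1\<^sub>m L * 1\<^sub>m L) (U * mat_adjoint U)"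
      by (simp only: aG, simp only: G_def, rule kron_mult_kron[OF one_carrier_mat U one_carrier_mat aU])
    then show ?thesis using UaU kron_one by simp
  qed
  have Geq: "G * kron Kq D * mat_adjoint G = kron Kq Kr"
  proof -
    have "G * kron Kq D = kron Kq (U * D)"
      unfolding G_def using kron_mult_kron[OF one_carrier_mat U Kqc Dc] Kqc by simp
    also have "\<dots> * mat_adjoint G = kron (Kq * 1\<^sub>m L) (U * D * mat_adjoint U)"
      unfolding aG by (rule kron_mult_kron[OF Kqc mult_carrier_mat[OF U Dc] one_carrier_mat aU])
    finally show ?thesis using Kqc KrD by simp
  qed
  have "pos_def (L*N) (mat_adjoint (mat_adjoint G) * kron Kq D * mat_adjoint G)"
    by (rule pos_def_sandwich_left_invertible[OF KD mat_adjoint_carrier[OF Gc] Gc GaG])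
  then show ?thesis using Geq by simp
qed

lemma hpd_kron: assumes Kq: "hpd L Kq" and Kr: "hpd N Kr"
  shows "pos_def (L*N) (kron Kq Kr)" "mat_adjoint (kron Kq Kr) = kron Kq Kr"
  using pos_def_kron[OF hpd_pos_def[OF Kq] hpd_pos_def[OF Kr]] mat_adjoint_kron hpd_hermitian[OF Kq] hpd_hermitian[OF Kr]
  by auto

section \<open>Trace inequalities\<close>

text \<open>Since X U = 0, the inverse W of I + X fixes the range of U, hence
  W - U U^H = R W R for the projection R = I - U U^H.\<close>
lemma pos_semidef_minv_one_plus_minus_projection:
  assumes X: "(X::complex mat) \<in> carrier_mat n n" and Xh: "mat_adjoint X = X" and Xp: "pos_semidef n X"
    and U: "U \<in> carrier_mat n k" and UU: "mat_adjoint U * U = 1\<^sub>m k" and XU: "X * U = 0\<^sub>m n k"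
  shows "pos_semidef n (minv (1\<^sub>m n + X) - U * mat_adjoint U)"
proof -
  define B where "B = 1\<^sub>m n + X"
  have Bc: "B \<in> carrier_mat n n" unfolding B_def using X by simp
  have Bh: "mat_adjoint B = B" unfolding B_def using mat_adjoint_add[OF one_carrier_mat X] Xh by simp
  note mi = minv_pos_def_hermitian[OF pos_def_one_plus[OF X Xp, folded B_def] Bh]
  define W where "W = minv B"
  have Wc: "W \<in> carrier_mat n n" and WB: "W * B = 1\<^sub>m n" and Wh: "mat_adjoint W = W"
    using mi unfolding W_def by auto
  have aU: "mat_adjoint U \<in> carrier_mat k n" using U by simp
  have BU: "B * U = U"
    unfolding B_def using add_mult_distrib_mat[OF one_carrier_mat X U] XU U by simp
  have WU: "W * U = U"
  proof -
    have "W * U = (W * B) * U" using BU assoc_mult_mat[OF Wc Bc U] by simp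
    then show ?thesis using WB U by simp
  qed
  have UW: "mat_adjoint U * W = mat_adjoint U"
    using mat_adjoint_mult[OF Wc U] WU Wh by simp
  define P where "P = U * mat_adjoint U"
  have Pc: "P \<in> carrier_mat n n" unfolding P_def using U by simp
  have PP: "P * P = P"
  proof -
    have "P * P = U * ((mat_adjoint U * U) * mat_adjoint U)"
      unfolding P_def using assoc_mult_mat[OF U aU mult_carrier_mat[OF U aU]] assoc_mult_mat[OF aU U aU] by simp
    then show ?thesis unfolding P_def using UU left_mult_one_mat[OF aU] by simp
  qed
  have WP: "W * P = P" unfolding P_def using assoc_mult_mat[OF Wc U aU] WU by simp
  have PW: "P * W = P" unfolding P_def using assoc_mult_mat[OF U aU Wc] UW by simp
  define R where "R = 1\<^sub>m n - P"
  have Rc: "R \<in> carrier_mat n n" unfolding R_def using Pc by (rule minus_carrier_mat)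
  have Rh: "mat_adjoint R = R"
    unfolding R_def P_def using mat_adjoint_minus[OF one_carrier_mat Pc[unfolded P_def]] mat_adjoint_mult[OF U aU] by simp
  have WPc: "W - P \<in> carrier_mat n n" using Pc by (rule minus_carrier_mat)
  have "mat_adjoint R * W * R = (W - P) * R"
    using Rh minus_mult_distrib_mat[OF one_carrier_mat Pc Wc] PW Wc unfolding R_def by simp
  also have "\<dots> = (W - P) * 1\<^sub>m n - (W * P - P * P)"
    unfolding R_def using mult_minus_distrib_mat[OF WPc one_carrier_mat Pc] minus_mult_distrib_mat[OF Wc Pc Pc] by simp
  also have "\<dots> = W - P" using WP PP Pc right_mult_one_mat[OF WPc] minus_zero_mat_right[OF WPc] by simp
  finally have T: "W - P = mat_adjoint R * W * R" by simp
  show ?thesis unfolding pos_semidef_def W_def[symmetric] B_def[symmetric] P_def[symmetric]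
  proof (intro conjI ballI WPc)
    fix z :: "complex mat" assume z: "z \<in> carrier_mat n 1"
    have "quad_form (W - P) z = quad_form W (R * z)" unfolding T by (rule quad_form_sandwich[OF Rc Wc z])
    then show "0 \<le> Re (quad_form (W - P) z)"
      using pos_def_pos_semidef[OF mi(2)] mult_carrier_mat[OF Rc z] unfolding W_def pos_semidef_def by simp
  qed
qed

lemma compression_le_mtrace_minv_one_plus:
  assumes D: "(D::complex mat) \<in> carrier_mat m n" and X: "X \<in> carrier_mat n n" and Xh: "mat_adjoint X = X"
    and Xp: "pos_semidef n X" and U: "U \<in> carrier_mat n k" and UU: "mat_adjoint U * U = 1\<^sub>m k" and XU: "X * U = 0\<^sub>m n k"
  shows "Re (mtrace (mat_adjoint U * (mat_adjoint D * D) * U)) \<le> Re (mtrace (mat_adjoint D * D * minv (1\<^sub>m n + X)))"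
proof -
  define W where "W = minv (1\<^sub>m n + X)"
  define P where "P = U * mat_adjoint U"
  have Wc: "W \<in> carrier_mat n n" unfolding W_def
    using minv_inverse(3)[OF _ pos_def_det_neq_zero[OF pos_def_one_plus[OF X Xp]]] X by simp
  have Pc: "P \<in> carrier_mat n n" unfolding P_def using U by simp
  have WPc: "W - P \<in> carrier_mat n n" using Pc by (rule minus_carrier_mat)
  have aU: "mat_adjoint U \<in> carrier_mat k n" using U by simp
  have aD: "mat_adjoint D \<in> carrier_mat n m" using D by simp
  have C0: "mat_adjoint D * D \<in> carrier_mat n n" by (rule mult_carrier_mat[OF aD D])
  have "mtrace (mat_adjoint U * (mat_adjoint D * D) * U) = mtrace (((mat_adjoint D * D) * U) * mat_adjoint U)"
    using assoc_mult_mat[OF aU C0 U] mtrace_mult_commute[OF aU mult_carrier_mat[OF C0 U]] by simp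
  also have "\<dots> = mtrace (mat_adjoint D * D * P)" unfolding P_def using assoc_mult_mat[OF C0 U aU] by simp
  finally have tr1: "mtrace (mat_adjoint U * (mat_adjoint D * D) * U) = mtrace (mat_adjoint D * D * P)" .
  have "mtrace (mat_adjoint D * D * W) - mtrace (mat_adjoint D * D * P) = mtrace (mat_adjoint D * (D * (W - P)))"
    using mtrace_minus[OF mult_carrier_mat[OF C0 Wc] mult_carrier_mat[OF C0 Pc]]
      mult_minus_distrib_mat[OF C0 Wc Pc] assoc_mult_mat[OF aD D WPc] by simp
  also have "\<dots> = mtrace (D * (W - P) * mat_adjoint D)"
    by (rule mtrace_mult_commute[OF aD mult_carrier_mat[OF D WPc]])
  finally have tr2: "mtrace (mat_adjoint D * D * W) - mtrace (mat_adjoint D * D * P) = mtrace (D * (W - P) * mat_adjoint D)" .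
  have "0 \<le> Re (mtrace (D * (W - P) * mat_adjoint D))"
    by (rule mtrace_sandwich_nonneg[OF WPc _ D])
      (use pos_semidef_minv_one_plus_minus_projection[OF X Xh Xp U UU XU] in \<open>simp add: W_def P_def\<close>)
  then show ?thesis using arg_cong[OF tr2, of Re] tr1 unfolding W_def by simp
qed

lemma ky_fan_weights: fixes \<sigma> g :: "nat \<Rightarrow> real"
  assumes dec: "\<And>i j. i \<le> j \<Longrightarrow> j < M \<Longrightarrow> \<sigma> j \<le> \<sigma> i"
  and g0: "\<And>i. i < M \<Longrightarrow> 0 \<le> g i" and g1: "\<And>i. i < M \<Longrightarrow> g i \<le> 1"
  and gs: "(\<Sum>i<M. g i) = real (M - L)" and LM: "L < M"
  shows "(\<Sum>i\<in>{L..<M}. \<sigma> i) \<le> (\<Sum>i<M. \<sigma> i * g i)"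
proof -
  let ?c = "\<sigma> L"
  have split: "\<And>f::nat\<Rightarrow>real. (\<Sum>i<M. f i) = (\<Sum>i<L. f i) + (\<Sum>i\<in>{L..<M}. f i)"
  proof -
    fix f :: "nat \<Rightarrow> real"
    have "{..<M} = {..<L} \<union> {L..<M}" using LM by auto
    then show "(\<Sum>i<M. f i) = (\<Sum>i<L. f i) + (\<Sum>i\<in>{L..<M}. f i)"
      by (simp add: sum.union_disjoint ivl_disj_int(2))
  qed
  have A: "(\<Sum>i<L. ?c * g i) \<le> (\<Sum>i<L. \<sigma> i * g i)"
  proof (rule sum_mono)
    fix i assume "i \<in> {..<L}"
    then have i: "i < L" by simp
    then have "?c \<le> \<sigma> i" using dec[of i L] LM by simp
    then show "?c * g i \<le> \<sigma> i * g i" using g0[of i] i LM by (intro mult_right_mono) auto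
  qed
  have B: "(\<Sum>i\<in>{L..<M}. ?c * (g i - 1)) \<le> (\<Sum>i\<in>{L..<M}. \<sigma> i * (g i - 1))"
  proof (rule sum_mono)
    fix i assume "i \<in> {L..<M}"
    then have i: "L \<le> i" "i < M" by auto
    then have "\<sigma> i \<le> ?c" using dec[of L i] by simp
    moreover have "g i - 1 \<le> 0" using g1[OF i(2)] by simp
    ultimately show "?c * (g i - 1) \<le> \<sigma> i * (g i - 1)" by (intro mult_right_mono_neg) auto
  qed
  have "(\<Sum>i<L. ?c * g i) + (\<Sum>i\<in>{L..<M}. ?c * (g i - 1)) = ?c * ((\<Sum>i<M. g i) - real (M - L))"
    using split[of g] LM by (simp add: sum_distrib_left[symmetric] sum_subtractf right_diff_distrib distrib_left algebra_simps)
  also have "\<dots> = 0" using gs by simp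
  finally have C: "(\<Sum>i<L. ?c * g i) + (\<Sum>i\<in>{L..<M}. ?c * (g i - 1)) = 0" .
  have "(\<Sum>i<M. \<sigma> i * g i) - (\<Sum>i\<in>{L..<M}. \<sigma> i) = (\<Sum>i<L. \<sigma> i * g i) + (\<Sum>i\<in>{L..<M}. \<sigma> i * (g i - 1))"
    using split[of "\<lambda>i. \<sigma> i * g i"] by (simp add: sum_subtractf right_diff_distrib)
  then show ?thesis using A B C by linarith
qed

lemma quad_form_one_minus_projection_nonneg: assumes G: "(G::complex mat) \<in> carrier_mat n n" and Gh: "mat_adjoint G = G" and GG: "G * G = G"
  and v: "v \<in> carrier_mat n 1"
  shows "0 \<le> Re (quad_form (1\<^sub>m n - G) v)"
proof -
  have R: "1\<^sub>m n - G \<in> carrier_mat n n" using G by (rule minus_carrier_mat)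
  have Rh: "mat_adjoint (1\<^sub>m n - G) = 1\<^sub>m n - G" using mat_adjoint_minus[OF one_carrier_mat G] Gh by simp
  have "(1\<^sub>m n - G) * (1\<^sub>m n - G) = (1\<^sub>m n - G) * 1\<^sub>m n - (1\<^sub>m n - G) * G"
    by (rule mult_minus_distrib_mat[OF R one_carrier_mat G])
  also have "(1\<^sub>m n - G) * G = 1\<^sub>m n * G - G * G" by (rule minus_mult_distrib_mat[OF one_carrier_mat G G])
  also have "\<dots> = 0\<^sub>m n n" using GG G by simp
  finally have RR: "(1\<^sub>m n - G) * (1\<^sub>m n - G) = 1\<^sub>m n - G" using right_mult_one_mat[OF R] minus_zero_mat_right[OF R] by simp
  have "quad_form (1\<^sub>m n - G) v = quad_form (mat_adjoint (1\<^sub>m n - G) * 1\<^sub>m n * (1\<^sub>m n - G)) v"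
    using Rh RR right_mult_one_mat[OF R] by simp
  also have "\<dots> = quad_form (1\<^sub>m n) ((1\<^sub>m n - G) * v)" by (rule quad_form_sandwich[OF R one_carrier_mat v])
  also have "\<dots> = of_real (\<Sum>i<n. (cmod (((1\<^sub>m n - G) * v) $$ (i,0)))^2)"
    using quad_form_one[OF mult_carrier_mat[OF R v]] index_adjoint_self_mult[OF mult_carrier_mat[OF R v]] by simp
  finally show ?thesis by (simp add: sum_nonneg)
qed

lemma orthonormal_projection_diag:
  assumes Y: "(Y::complex mat) \<in> carrier_mat n k" and YY: "mat_adjoint Y * Y = 1\<^sub>m k"
  shows "\<exists>g. (\<forall>i<n. (Y * mat_adjoint Y) $$ (i,i) = of_real (g i) \<and> 0 \<le> g i \<and> g i \<le> 1)
    \<and> (\<Sum>i<n. g i) = real k"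
proof -
  define G where "G = Y * mat_adjoint Y"
  have aYc: "mat_adjoint Y \<in> carrier_mat k n" using Y by simp
  have Gc: "G \<in> carrier_mat n n" unfolding G_def using Y by simp
  have Gh: "mat_adjoint G = G" unfolding G_def using mat_adjoint_mult[OF Y aYc] by simp
  have "G * G = Y * (mat_adjoint Y * 1\<^sub>m n * Y) * mat_adjoint Y"
    unfolding G_def using right_mult_one_mat[OF Gc[unfolded G_def]] assoc_mult_mat5[OF Y aYc one_carrier_mat Y aYc] by simp
  then have GG: "G * G = G" unfolding G_def using YY aYc Y by simp
  have trG: "mtrace G = of_nat k"
    unfolding G_def using mtrace_mult_commute[OF Y aYc] YY by (simp add: mtrace_def)
  define g where "g i = (\<Sum>j<k. (cmod ((mat_adjoint Y * unit_col n i) $$ (j,0)))^2)" for i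
  have Gii: "G $$ (i,i) = of_real (g i)" if i: "i < n" for i
  proof -
    have "G $$ (i,i) = quad_form (mat_adjoint (mat_adjoint Y) * 1\<^sub>m k * mat_adjoint Y) (unit_col n i)"
      using quad_form_unit_col[OF Gc i] unfolding G_def using Y by simp
    also have "\<dots> = quad_form (1\<^sub>m k) (mat_adjoint Y * unit_col n i)"
      by (rule quad_form_sandwich[OF aYc one_carrier_mat unit_col_carrier])
    finally show ?thesis unfolding g_def
      using quad_form_one[OF mult_carrier_mat[OF aYc unit_col_carrier]]
        index_adjoint_self_mult[OF mult_carrier_mat[OF aYc unit_col_carrier]] by simp
  qed
  have "g i \<le> 1" if i: "i < n" for i
  proof -
    have "0 \<le> Re (quad_form (1\<^sub>m n - G) (unit_col n i))"
      by (rule quad_form_one_minus_projection_nonneg[OF Gc Gh GG unit_col_carrier])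
    also have "quad_form (1\<^sub>m n - G) (unit_col n i) = 1 - G $$ (i,i)"
      using quad_form_unit_col[OF minus_carrier_mat[OF Gc] i] Gc i by simp
    finally show ?thesis using Gii[OF i] by simp
  qed
  moreover have "(\<Sum>i<n. g i) = real k"
  proof -
    have "(\<Sum>i<n. g i) = Re (mtrace G)" unfolding mtrace_def using Gc Gii by simp
    then show ?thesis using trG by simp
  qed
  ultimately show ?thesis using Gii unfolding G_def by (intro exI[of _ g]) (auto simp: g_def sum_nonneg)
qed

text \<open>Ky Fan's minimum principle. In the eigenbasis of Z the trace is a weighted eigenvalue sum whose
  weights, the diagonal of a projection of rank M - L, lie in [0,1] and sum to M - L.\<close>
lemma ky_fan_compression:
  assumes Z: "(Z::complex mat) \<in> carrier_mat M M" and Zh: "mat_adjoint Z = Z"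
    and cp: "char_poly Z = (\<Prod>k<M. [:- complex_of_real (\<sigma> k), 1:])"
    and dec: "\<And>i j. i \<le> j \<Longrightarrow> j < M \<Longrightarrow> \<sigma> j \<le> \<sigma> i"
    and V: "V \<in> carrier_mat M (M - L)" and VV: "mat_adjoint V * V = 1\<^sub>m (M - L)" and LM: "L < M"
  shows "(\<Sum>m\<in>{L..<M}. \<sigma> m) \<le> Re (mtrace (mat_adjoint V * Z * V))"
proof -
  define es where "es = map (\<lambda>i. complex_of_real (\<sigma> i)) [0..<M]"
  have cp': "char_poly Z = (\<Prod>e\<leftarrow>es. [:- e, 1:])" unfolding es_def cp by (rule prod_linear_factors_list)
  obtain P where P: "P \<in> carrier_mat M M" and PP: "mat_adjoint P * P = 1\<^sub>m M"
    and PZP: "mat_adjoint P * Z * P = diag_of M (\<lambda>i. es ! i)"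
    using hermitian_unitary_diagonalization[OF Z Zh cp'] by blast
  define Lam where "Lam = diag_of M (\<lambda>i. es ! i)"
  have Lc: "Lam \<in> carrier_mat M M" unfolding Lam_def by simp
  have aP: "mat_adjoint P \<in> carrier_mat M M" using P by simp
  have aV: "mat_adjoint V \<in> carrier_mat (M - L) M" using V by simp
  have PaP: "P * mat_adjoint P = 1\<^sub>m M" by (rule unitary_right_inverse[OF P PP])
  have "(P * mat_adjoint P) * Z * (P * mat_adjoint P) = P * (mat_adjoint P * Z * P) * mat_adjoint P"
    by (rule assoc_mult_mat5[OF P aP Z P aP])
  then have Zeq: "Z = P * Lam * mat_adjoint P" using PaP PZP Z unfolding Lam_def by simp
  define Y where "Y = mat_adjoint P * V"
  have Y: "Y \<in> carrier_mat M (M - L)" unfolding Y_def using aP V by simp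
  have aY: "mat_adjoint Y = mat_adjoint V * P" unfolding Y_def using mat_adjoint_mult[OF aP V] by simp
  have aYc: "mat_adjoint Y \<in> carrier_mat (M - L) M" using Y by simp
  have "mat_adjoint Y * Lam * Y = mat_adjoint V * (P * Lam * mat_adjoint P) * V"
    unfolding aY by (simp only: Y_def, rule assoc_mult_mat5[OF aV P Lc aP V])
  then have VZV: "mat_adjoint V * Z * V = mat_adjoint Y * Lam * Y" using Zeq by simp
  have "mat_adjoint Y * Y = mat_adjoint V * (P * 1\<^sub>m M * mat_adjoint P) * V"
    unfolding aY using right_mult_one_mat[OF mult_carrier_mat[OF aV P]]
      assoc_mult_mat5[OF aV P one_carrier_mat aP V] by (simp only: Y_def)
  then have YY: "mat_adjoint Y * Y = 1\<^sub>m (M - L)" using PaP P VV V by simp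
  obtain g where g: "\<And>i. i < M \<Longrightarrow> (Y * mat_adjoint Y) $$ (i,i) = of_real (g i) \<and> 0 \<le> g i \<and> g i \<le> 1"
    and gs: "(\<Sum>i<M. g i) = real (M - L)"
    using orthonormal_projection_diag[OF Y YY] by blast
  have "mtrace (mat_adjoint Y * Lam * Y) = mtrace ((Y * mat_adjoint Y) * Lam)"
    using mtrace_mult_commute[OF mult_carrier_mat[OF aYc Lc] Y] assoc_mult_mat[OF Y aYc Lc] by simp
  also have "\<dots> = (\<Sum>i<M. (Y * mat_adjoint Y) $$ (i,i) * es ! i)"
    unfolding Lam_def by (rule mtrace_mult_diag_of) (use Y in simp)
  also have "\<dots> = (\<Sum>i<M. of_real (\<sigma> i * g i))"
    using g by (intro sum.cong refl) (simp add: es_def)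
  finally have "Re (mtrace (mat_adjoint V * Z * V)) = (\<Sum>i<M. \<sigma> i * g i)" unfolding VZV by simp
  moreover have "(\<Sum>m\<in>{L..<M}. \<sigma> m) \<le> (\<Sum>i<M. \<sigma> i * g i)"
    by (rule ky_fan_weights[OF dec _ _ gs LM]) (use g in auto)
  ultimately show ?thesis by simp
qed

lemma minv_one_plus_smult_unitary_diag:
  assumes Y: "(Y::complex mat) \<in> carrier_mat n n" and P: "P \<in> carrier_mat n n" and PP: "mat_adjoint P * P = 1\<^sub>m n"
    and PYP: "mat_adjoint P * Y * P = diag_of n (\<lambda>i. complex_of_real (lam i))"
    and pos: "\<And>i. i < n \<Longrightarrow> 1 + t * lam i \<noteq> 0"
  shows "minv (1\<^sub>m n + complex_of_real t \<cdot>\<^sub>m Y)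
    = P * diag_of n (\<lambda>i. complex_of_real (1 / (1 + t * lam i))) * mat_adjoint P"
proof -
  define Lam where "Lam = diag_of n (\<lambda>i. complex_of_real (lam i))"
  define D where "D = diag_of n (\<lambda>i. complex_of_real (1 / (1 + t * lam i)))"
  have Lc: "Lam \<in> carrier_mat n n" and Dc: "D \<in> carrier_mat n n" unfolding Lam_def D_def by simp_all
  have aP: "mat_adjoint P \<in> carrier_mat n n" using P by simp
  have PaP: "P * mat_adjoint P = 1\<^sub>m n" by (rule unitary_right_inverse[OF P PP])
  have "P * Lam = (P * mat_adjoint P) * Y * P"
    unfolding Lam_def PYP[symmetric]
    using assoc_mult_mat[OF P mult_carrier_mat[OF aP Y] P] assoc_mult_mat[OF P aP Y] by simp
  then have YP: "Y * P = P * Lam" using PaP left_mult_one_mat[OF Y] by simp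
  have LD: "Lam * D = diag_of n (\<lambda>i. complex_of_real (lam i / (1 + t * lam i)))"
    unfolding Lam_def D_def diag_of_mult by simp
  have DL: "D + complex_of_real t \<cdot>\<^sub>m (Lam * D) = 1\<^sub>m n"
  proof (rule eq_matI)
    fix i j assume "i < dim_row (1\<^sub>m n :: complex mat)" "j < dim_col (1\<^sub>m n :: complex mat)"
    then have ij: "i < n" "j < n" by auto
    have "1 / (1 + t * lam i) + t * (lam i / (1 + t * lam i)) = 1"
      using pos[OF ij(1)] by (simp add: field_simps)
    then have "complex_of_real (1 / (1 + t * lam i)) + complex_of_real t * complex_of_real (lam i / (1 + t * lam i)) = 1"
      by (simp only: of_real_mult[symmetric] of_real_add[symmetric]) simp
    then show "(D + complex_of_real t \<cdot>\<^sub>m (Lam * D)) $$ (i,j) = 1\<^sub>m n $$ (i,j)"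
      using ij Dc unfolding LD by (cases "i = j") (simp_all add: D_def diag_of_def)
  qed (use Dc Lc in auto)
  define W where "W = P * D * mat_adjoint P"
  have Wc: "W \<in> carrier_mat n n" unfolding W_def using P Dc aP by (meson mult_carrier_mat)
  have PD: "P * D \<in> carrier_mat n n" and PLD: "P * (Lam * D) \<in> carrier_mat n n" using P Dc Lc by auto
  have "Y * W = P * (Lam * D) * mat_adjoint P"
    unfolding W_def using assoc_mult_mat[OF Y PD aP] assoc_mult_mat[OF Y P Dc] YP assoc_mult_mat[OF P Lc Dc] by simp
  then have "(1\<^sub>m n + complex_of_real t \<cdot>\<^sub>m Y) * W = P * D * mat_adjoint P + complex_of_real t \<cdot>\<^sub>m (P * (Lam * D) * mat_adjoint P)"
    using add_mult_distrib_mat[OF one_carrier_mat smult_carrier_mat[OF Y] Wc] mult_smult_assoc_mat[OF Y Wc]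
      left_mult_one_mat[OF Wc] unfolding W_def by simp
  also have "\<dots> = P * (D + complex_of_real t \<cdot>\<^sub>m (Lam * D)) * mat_adjoint P"
    using mult_add_distrib_mat[OF P Dc smult_carrier_mat[OF mult_carrier_mat[OF Lc Dc]]]
      mult_smult_distrib[OF P mult_carrier_mat[OF Lc Dc]]
      add_mult_distrib_mat[OF PD smult_carrier_mat[OF PLD] aP] mult_smult_assoc_mat[OF PLD aP] by simp
  also have "\<dots> = 1\<^sub>m n" unfolding DL using PaP right_mult_one_mat[OF P] by simp
  finally have "(1\<^sub>m n + complex_of_real t \<cdot>\<^sub>m Y) * W = 1\<^sub>m n" .
  then show ?thesis unfolding W_def[symmetric] D_def[symmetric]
    by (intro minv_right_inverse_unique(1)[OF _ Wc]) (use Y in simp_all)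
qed

text \<open>In the eigenbasis of Y the inverse is diagonal with entries 1/(1 + t lam_i) \<le> 1/(t lam_i).\<close>
lemma mtrace_minv_one_plus_scaled_bound:
  assumes Y: "(Y::complex mat) \<in> carrier_mat n n" and Yh: "mat_adjoint Y = Y" and Yp: "pos_def n Y"
    and C0: "C0 \<in> carrier_mat n n"
  shows "\<exists>K. \<forall>t>0. Re (mtrace (C0 * minv (1\<^sub>m n + complex_of_real t \<cdot>\<^sub>m Y))) \<le> K / t"
proof -
  obtain P lam where P: "P \<in> carrier_mat n n" and PP: "mat_adjoint P * P = 1\<^sub>m n"
    and PYP: "mat_adjoint P * Y * P = diag_of n (\<lambda>i. complex_of_real (lam i))" and lam: "\<And>i. i < n \<Longrightarrow> 0 < lam i"
    using pos_def_unitary_diagonalization[OF Y Yh Yp] by blast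
  have aP: "mat_adjoint P \<in> carrier_mat n n" using P by simp
  define B where "B = mat_adjoint P * C0 * P"
  have Bc: "B \<in> carrier_mat n n" unfolding B_def using aP C0 P by (meson mult_carrier_mat)
  show ?thesis
  proof (intro exI allI impI)
    fix t :: real assume t: "t > 0"
    define D where "D = diag_of n (\<lambda>i. complex_of_real (1 / (1 + t * lam i)))"
    have Dc: "D \<in> carrier_mat n n" unfolding D_def by simp
    have PD: "P * D \<in> carrier_mat n n" using P Dc by simp
    have "1 + t * lam i \<noteq> 0" if "i < n" for i using mult_pos_pos[OF t lam[OF that]] by linarith
    then have "minv (1\<^sub>m n + complex_of_real t \<cdot>\<^sub>m Y) = P * D * mat_adjoint P" unfolding D_def
      by (rule minv_one_plus_smult_unitary_diag[OF Y P PP PYP])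
    then have "mtrace (C0 * minv (1\<^sub>m n + complex_of_real t \<cdot>\<^sub>m Y)) = mtrace (mat_adjoint P * (C0 * (P * D)))"
      using assoc_mult_mat[OF C0 PD aP] mtrace_mult_commute[OF mult_carrier_mat[OF C0 PD] aP] by simp
    also have "mat_adjoint P * (C0 * (P * D)) = B * D" unfolding B_def
      using assoc_mult_mat[OF aP C0 PD] assoc_mult_mat[OF mult_carrier_mat[OF aP C0] P Dc] by simp
    also have "mtrace (B * D) = (\<Sum>i<n. B $$ (i,i) * complex_of_real (1 / (1 + t * lam i)))"
      unfolding D_def by (rule mtrace_mult_diag_of[OF Bc])
    finally have "Re (mtrace (C0 * minv (1\<^sub>m n + complex_of_real t \<cdot>\<^sub>m Y)))
        = (\<Sum>i<n. Re (B $$ (i,i)) * (1 / (1 + t * lam i)))" by simp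
    also have "\<dots> \<le> (\<Sum>i<n. (cmod (B $$ (i,i)) / lam i) / t)"
    proof (rule sum_mono)
      fix i assume "i \<in> {..<n}"
      then have l: "0 < lam i" using lam by simp
      have "Re (B $$ (i,i)) * (1 / (1 + t * lam i)) \<le> cmod (B $$ (i,i)) * (1 / (1 + t * lam i))"
        using l t by (intro mult_right_mono complex_Re_le_cmod) (auto simp: add_pos_pos less_imp_le)
      also have "\<dots> \<le> cmod (B $$ (i,i)) * (1 / (t * lam i))"
        using l t by (intro mult_left_mono divide_left_mono) (auto simp: add_pos_pos)
      finally show "Re (B $$ (i,i)) * (1 / (1 + t * lam i)) \<le> (cmod (B $$ (i,i)) / lam i) / t"
        by (simp add: mult.commute)
    qed
    also have "\<dots> = (\<Sum>i<n. cmod (B $$ (i,i)) / lam i) / t" by (simp add: sum_divide_distrib)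
    finally show "Re (mtrace (C0 * minv (1\<^sub>m n + complex_of_real t \<cdot>\<^sub>m Y))) \<le> (\<Sum>i<n. cmod (B $$ (i,i)) / lam i) / t" .
  qed
qed

section \<open>The LMMSE error\<close>

lemma lmmse_err_unfold: "lmmse_err S Ct Cr Kq Kr =
  Re (mtrace (kron (mat_adjoint Ct * Ct) (mat_adjoint Cr * Cr) *
     minv (1\<^sub>m (dim_col (kron (transpose_mat S * Ct) Cr)) +
        mat_adjoint (kron (transpose_mat S * Ct) Cr) * minv (kron Kq Kr) * kron (transpose_mat S * Ct) Cr)))"
  unfolding lmmse_err_def Let_def ..

lemma lmmse_err_ge_compression:
  assumes Ct: "Ct \<in> carrier_mat M M" and Cr: "Cr \<in> carrier_mat N N" and S: "S \<in> carrier_mat M L"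
    and Kq: "hpd L Kq" and Kr: "hpd N Kr"
    and V: "V \<in> carrier_mat M k" and VV: "mat_adjoint V * V = 1\<^sub>m k" and AV: "transpose_mat S * Ct * V = 0\<^sub>m L k"
  shows "Re (mtrace (mat_adjoint V * (mat_adjoint Ct * Ct) * V) * mtrace (mat_adjoint Cr * Cr)) \<le> lmmse_err S Ct Cr Kq Kr"
proof -
  define A where "A = transpose_mat S * Ct"
  have Ac: "A \<in> carrier_mat L M" unfolding A_def using S Ct by simp
  define F where "F = kron A Cr"
  have Fc: "F \<in> carrier_mat (L*N) (M*N)" unfolding F_def using Ac Cr by simp
  define K where "K = kron Kq Kr"
  have Kpd: "pos_def (L*N) K" and Kh: "mat_adjoint K = K" unfolding K_def using hpd_kron[OF Kq Kr] by auto
  note Ki = minv_pos_def_hermitian[OF Kpd Kh]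
  define X where "X = mat_adjoint F * minv K * F"
  have Xp: "pos_semidef (M*N) X" unfolding X_def by (rule pos_semidef_sandwich[OF Fc pos_def_pos_semidef[OF Ki(2)]])
  have Xh: "mat_adjoint X = X" unfolding X_def by (rule mat_adjoint_hermitian_sandwich[OF Ki(3,1) Fc])
  have Xc: "X \<in> carrier_mat (M*N) (M*N)" using Xp by (simp add: pos_semidef_def)
  define D where "D = kron Ct Cr"
  have Dc: "D \<in> carrier_mat (M*N) (M*N)" unfolding D_def using Ct Cr by simp
  have C0: "mat_adjoint D * D = kron (mat_adjoint Ct * Ct) (mat_adjoint Cr * Cr)"
    unfolding D_def mat_adjoint_kron by (rule kron_mult_kron[OF mat_adjoint_carrier[OF Ct] mat_adjoint_carrier[OF Cr] Ct Cr])
  define U where "U = kron V (1\<^sub>m N)"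
  have Uc: "U \<in> carrier_mat (M*N) (k*N)" unfolding U_def using V by simp
  have XU: "X * U = 0\<^sub>m (M*N) (k*N)"
  proof -
    have aFK: "mat_adjoint F * minv K \<in> carrier_mat (M*N) (L*N)" using mult_carrier_mat[OF mat_adjoint_carrier[OF Fc] Ki(3)] .
    have "F * U = kron (A * V) (Cr * 1\<^sub>m N)" unfolding F_def U_def by (rule kron_mult_kron[OF Ac Cr V one_carrier_mat])
    then have "F * U = 0\<^sub>m (L*N) (k*N)" using AV Cr kron_zero_left[OF Cr] unfolding A_def by simp
    then show ?thesis unfolding X_def using assoc_mult_mat[OF aFK Fc Uc] right_mult_zero_mat[OF aFK] by simp
  qed
  have "Re (mtrace (mat_adjoint U * (mat_adjoint D * D) * U)) \<le> Re (mtrace (mat_adjoint D * D * minv (1\<^sub>m (M*N) + X)))"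
    by (rule compression_le_mtrace_minv_one_plus[OF Dc Xc Xh Xp Uc _ XU])
      (unfold U_def, rule kron_one_right_orthonormal[OF V VV])
  moreover have "mtrace (mat_adjoint U * (mat_adjoint D * D) * U) = mtrace (mat_adjoint V * (mat_adjoint Ct * Ct) * V) * mtrace (mat_adjoint Cr * Cr)"
    unfolding C0 U_def
    by (rule mtrace_kron_compression[OF V mult_carrier_mat[OF mat_adjoint_carrier[OF Ct] Ct]
          mult_carrier_mat[OF mat_adjoint_carrier[OF Cr] Cr]])
  moreover have "dim_col F = M*N" using Fc by simp
  then have "lmmse_err S Ct Cr Kq Kr = Re (mtrace (mat_adjoint D * D * minv (1\<^sub>m (M*N) + X)))"
    unfolding lmmse_err_unfold C0 X_def F_def[symmetric] K_def[symmetric] A_def[symmetric] by simp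
  ultimately show ?thesis by simp
qed

lemma lmmse_err_lower_bound:
  assumes Ct: "Ct \<in> carrier_mat M M" "invertible_mat Ct" and Cr: "Cr \<in> carrier_mat N N"
    and S: "S \<in> carrier_mat M L" and Kq: "hpd L Kq" and Kr: "hpd N Kr" and LM: "L < M"
    and et: "eigenvalue_list M (Ct * mat_adjoint Ct) \<sigma>t" and dec: "\<forall>i j. i \<le> j \<and> j < M \<longrightarrow> \<sigma>t j \<le> \<sigma>t i"
    and er: "eigenvalue_list N (Cr * mat_adjoint Cr) \<sigma>r"
  shows "(\<Sum>m\<in>{L..<M}. \<sigma>t m) * (\<Sum>n<N. \<sigma>r n) \<le> lmmse_err S Ct Cr Kq Kr"
proof -
  have Ac: "transpose_mat S * Ct \<in> carrier_mat L M" using S Ct by simp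
  obtain V where V: "V \<in> carrier_mat M (M - L)" and VV: "mat_adjoint V * V = 1\<^sub>m (M - L)"
    and AV: "transpose_mat S * Ct * V = 0\<^sub>m L (M - L)"
    using orthonormal_kernel_basis[OF Ac, of "M - L"] LM by auto
  have aCt: "mat_adjoint Ct \<in> carrier_mat M M" using Ct by simp
  define Z where "Z = mat_adjoint Ct * Ct"
  have Zc: "Z \<in> carrier_mat M M" unfolding Z_def using aCt Ct(1) by (rule mult_carrier_mat)
  have Zh: "mat_adjoint Z = Z" unfolding Z_def using mat_adjoint_mult[OF aCt Ct(1)] by simp
  have cpZ: "char_poly Z = (\<Prod>k<M. [:- complex_of_real (\<sigma>t k), 1:])"
    unfolding Z_def char_poly_gram_commute[OF Ct] using et unfolding eigenvalue_list_def .
  define c where "c = mtrace (mat_adjoint V * Z * V)"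
  have T: "(\<Sum>m\<in>{L..<M}. \<sigma>t m) \<le> Re c" unfolding c_def
    by (rule ky_fan_compression[OF Zc Zh cpZ _ V VV LM]) (use dec in auto)
  note tr = mtrace_gram_eq_sum_eigenvalues[OF Cr er]
  have "(\<Sum>m\<in>{L..<M}. \<sigma>t m) * (\<Sum>n<N. \<sigma>r n) \<le> Re c * (\<Sum>n<N. \<sigma>r n)"
    using T tr(2) by (rule mult_right_mono)
  also have "\<dots> = Re (c * mtrace (mat_adjoint Cr * Cr))" using tr(1) by simp
  also have "\<dots> \<le> lmmse_err S Ct Cr Kq Kr"
    unfolding c_def Z_def by (rule lmmse_err_ge_compression[OF Ct(1) Cr S Kq Kr V VV AV])
  finally show ?thesis .
qed

text \<open>E = [I; 0] is the L x M identity; E has orthonormal columns and Cr is invertible, so Y is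
  positive definite.\<close>
lemma lmmse_err_scaled_bound:
  assumes Ct: "Ct \<in> carrier_mat M M" and Ci: "Ci \<in> carrier_mat M M" and CiC: "Ci * Ct = 1\<^sub>m M"
    and Cr: "Cr \<in> carrier_mat N N" "invertible_mat Cr" and Kq: "hpd L Kq" and Kr: "hpd N Kr"
    and LM: "M \<le> L" and E: "E = mat L M (\<lambda>(i,j). if i = j then (1::complex) else 0)"
  shows "\<exists>K. \<forall>c>0. lmmse_err (transpose_mat (complex_of_real c \<cdot>\<^sub>m (E * Ci))) Ct Cr Kq Kr \<le> K / (c*c)"
proof -
  have Ec: "E \<in> carrier_mat L M" unfolding E by simp
  have aE: "mat_adjoint E \<in> carrier_mat M L" using Ec by simp
  define G where "G = kron E Cr"
  have Gc: "G \<in> carrier_mat (L*N) (M*N)" unfolding G_def using Ec Cr by simp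
  define K where "K = kron Kq Kr"
  have Kpd: "pos_def (L*N) K" and Kh: "mat_adjoint K = K" unfolding K_def using hpd_kron[OF Kq Kr] by auto
  note Ki = minv_pos_def_hermitian[OF Kpd Kh]
  define Y where "Y = mat_adjoint G * minv K * G"
  have Yh: "mat_adjoint Y = Y" unfolding Y_def by (rule mat_adjoint_hermitian_sandwich[OF Ki(3,1) Gc])
  have Yc: "Y \<in> carrier_mat (M*N) (M*N)" unfolding Y_def using mat_adjoint_carrier[OF Gc] Ki(3) Gc by (meson mult_carrier_mat)
  have EE: "mat_adjoint E * E = 1\<^sub>m M"
  proof (rule eq_matI)
    fix i j assume "i < dim_row (1\<^sub>m M :: complex mat)" "j < dim_col (1\<^sub>m M :: complex mat)"
    then have ij: "i < M" "j < M" by auto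
    have "(mat_adjoint E * E) $$ (i,j) = (\<Sum>k<L. cnj (E $$ (k,i)) * E $$ (k,j))"
      using ij by (subst index_adjoint_mult_sum[OF Ec Ec]) auto
    also have "\<dots> = (\<Sum>k<L. if k = i then (if i = j then 1 else 0) else 0)"
      using ij LM by (intro sum.cong refl) (auto simp: E)
    finally show "(mat_adjoint E * E) $$ (i,j) = 1\<^sub>m M $$ (i,j)" using ij LM by simp
  qed (auto simp: E)
  obtain Cri where Cri: "Cri \<in> carrier_mat N N" and CriC: "Cri * Cr = 1\<^sub>m N"
    using invertible_mat_inverse[OF Cr(2) Cr(1)] by blast
  have "kron (mat_adjoint E) Cri * G = 1\<^sub>m (M*N)"
    unfolding G_def using kron_mult_kron[OF aE Cri Ec Cr(1)] EE CriC kron_one by simp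
  then have Ypd: "pos_def (M*N) Y" unfolding Y_def
    by (rule pos_def_sandwich_left_invertible[OF Ki(2) Gc, rotated]) (use aE Cri in simp)
  define C0 where "C0 = kron (mat_adjoint Ct * Ct) (mat_adjoint Cr * Cr)"
  have C0c: "C0 \<in> carrier_mat (M*N) (M*N)" unfolding C0_def
    by (rule kron_carrier[OF mult_carrier_mat[OF mat_adjoint_carrier[OF Ct] Ct] mult_carrier_mat[OF mat_adjoint_carrier Cr(1)]])
      (use Cr in simp)
  obtain Kb where Kb: "\<forall>t>0. Re (mtrace (C0 * minv (1\<^sub>m (M*N) + complex_of_real t \<cdot>\<^sub>m Y))) \<le> Kb / t"
    using mtrace_minv_one_plus_scaled_bound[OF Yc Yh Ypd C0c] by blast
  show ?thesis
  proof (intro exI allI impI)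
    fix c :: real assume c: "c > 0"
    have ECi: "E * Ci \<in> carrier_mat L M" using Ec Ci by simp
    have "transpose_mat (transpose_mat (complex_of_real c \<cdot>\<^sub>m (E * Ci))) * Ct = complex_of_real c \<cdot>\<^sub>m (E * Ci * Ct)"
      using mult_smult_assoc_mat[OF ECi Ct] by simp
    also have "E * Ci * Ct = E" using assoc_mult_mat[OF Ec Ci Ct] CiC right_mult_one_mat[OF Ec] by simp
    finally have A: "transpose_mat (transpose_mat (complex_of_real c \<cdot>\<^sub>m (E * Ci))) * Ct = complex_of_real c \<cdot>\<^sub>m E" .
    have F: "kron (complex_of_real c \<cdot>\<^sub>m E) Cr = complex_of_real c \<cdot>\<^sub>m G" unfolding G_def by (rule kron_smult_left)
    have X: "mat_adjoint (complex_of_real c \<cdot>\<^sub>m G) * minv K * (complex_of_real c \<cdot>\<^sub>m G) = complex_of_real (c*c) \<cdot>\<^sub>m Y"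
      unfolding Y_def using sandwich_smult[OF Gc Ki(3), of "complex_of_real c"] by simp
    have dF: "dim_col (complex_of_real c \<cdot>\<^sub>m G) = M*N" using Gc by simp
    have "lmmse_err (transpose_mat (complex_of_real c \<cdot>\<^sub>m (E * Ci))) Ct Cr Kq Kr =
       Re (mtrace (C0 * minv (1\<^sub>m (M*N) + complex_of_real (c*c) \<cdot>\<^sub>m Y)))"
      unfolding lmmse_err_unfold A F K_def[symmetric] X dF C0_def ..
    also have "\<dots> \<le> Kb / (c*c)" using Kb[rule_format, of "c*c"] c by simp
    finally show "lmmse_err (transpose_mat (complex_of_real c \<cdot>\<^sub>m (E * Ci))) Ct Cr Kq Kr \<le> Kb / (c*c)" .
  qed
qed

lemma lmmse_err_sum_arbitrarily_small:
  assumes Ct: "Ct \<in> carrier_mat M M" "invertible_mat Ct"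
    and Cr1: "Cr1 \<in> carrier_mat N1 N1" "invertible_mat Cr1"
    and Cr2: "Cr2 \<in> carrier_mat N2 N2" "invertible_mat Cr2"
    and Kq: "hpd L Kq1" "hpd L Kq2"
    and Kr: "hpd N1 Kr1" "hpd N2 Kr2"
    and LM: "M \<le> L" and eps: "(\<epsilon>::real) > 0"
  shows "\<exists>S \<in> carrier_mat M L. lmmse_err S Ct Cr1 Kq1 Kr1 + lmmse_err S Ct Cr2 Kq2 Kr2 < \<epsilon>"
proof -
  obtain Ci where Ci: "Ci \<in> carrier_mat M M" and CCi: "Ct * Ci = 1\<^sub>m M" and CiC: "Ci * Ct = 1\<^sub>m M"
    using invertible_mat_inverse[OF Ct(2) Ct(1)] by blast
  define E where "E = mat L M (\<lambda>(i,j). if i = j then (1::complex) else 0)"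
  obtain K1 where K1: "\<forall>c>0. lmmse_err (transpose_mat (complex_of_real c \<cdot>\<^sub>m (E * Ci))) Ct Cr1 Kq1 Kr1 \<le> K1 / (c*c)"
    using lmmse_err_scaled_bound[OF Ct(1) Ci CiC Cr1 Kq(1) Kr(1) LM E_def] by blast
  obtain K2 where K2: "\<forall>c>0. lmmse_err (transpose_mat (complex_of_real c \<cdot>\<^sub>m (E * Ci))) Ct Cr2 Kq2 Kr2 \<le> K2 / (c*c)"
    using lmmse_err_scaled_bound[OF Ct(1) Ci CiC Cr2 Kq(2) Kr(2) LM E_def] by blast
  define K where "K = \<bar>K1\<bar> + \<bar>K2\<bar>"
  have K: "0 \<le> K" unfolding K_def by simp
  define t where "t = (K + 1) / \<epsilon>"
  have t: "t > 0" unfolding t_def using eps K by simp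
  define c where "c = sqrt t"
  have c: "c > 0" and cc: "c * c = t" unfolding c_def using t by auto
  define S where "S = transpose_mat (complex_of_real c \<cdot>\<^sub>m (E * Ci))"
  have Ec: "E \<in> carrier_mat L M" unfolding E_def by simp
  have S: "S \<in> carrier_mat M L" unfolding S_def
    using smult_carrier_mat[OF mult_carrier_mat[OF Ec Ci]] by simp
  have "lmmse_err S Ct Cr1 Kq1 Kr1 + lmmse_err S Ct Cr2 Kq2 Kr2 \<le> K1 / t + K2 / t"
    using K1[rule_format, OF c] K2[rule_format, OF c] unfolding S_def cc by simp
  also have "\<dots> \<le> K / t" unfolding K_def using t by (simp add: add_divide_distrib[symmetric] divide_right_mono)
  also have "\<dots> = \<epsilon> * (K / (K + 1))" unfolding t_def using eps K by (simp add: field_simps)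
  also have "\<dots> < \<epsilon> * 1" using eps K by (intro mult_strict_left_mono) simp_all
  finally show ?thesis using S by auto
qed

lemma minv_kron_scalar_one: assumes Kr: "hpd N Kr" and q: "q \<noteq> 0"
  shows "minv (kron (complex_of_real q \<cdot>\<^sub>m 1\<^sub>m n) Kr) = kron (complex_of_real (1/q) \<cdot>\<^sub>m 1\<^sub>m n) (minv Kr)"
proof -
  have Krc: "Kr \<in> carrier_mat N N" using hpd_hermitian[OF Kr] by simp
  note mi = minv_inverse[OF Krc pos_def_det_neq_zero[OF hpd_pos_def[OF Kr]]]
  have qq: "(complex_of_real q \<cdot>\<^sub>m 1\<^sub>m n) * (complex_of_real (1/q) \<cdot>\<^sub>m 1\<^sub>m n) = 1\<^sub>m n"
  proof -
    have "(complex_of_real q \<cdot>\<^sub>m 1\<^sub>m n) * (complex_of_real (1/q) \<cdot>\<^sub>m 1\<^sub>m n) =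
      complex_of_real q \<cdot>\<^sub>m (1\<^sub>m n * (complex_of_real (1/q) \<cdot>\<^sub>m 1\<^sub>m n))"
      by (rule mult_smult_assoc_mat[OF one_carrier_mat smult_carrier_mat[OF one_carrier_mat]])
    also have "\<dots> = complex_of_real q \<cdot>\<^sub>m (complex_of_real (1/q) \<cdot>\<^sub>m 1\<^sub>m n)"
      using left_mult_one_mat[OF smult_carrier_mat[OF one_carrier_mat]] by simp
    also have "\<dots> = 1\<^sub>m n" by (rule eq_matI) (auto simp: q of_real_mult[symmetric] simp del: of_real_mult)
    finally show ?thesis .
  qed
  have "kron (complex_of_real q \<cdot>\<^sub>m 1\<^sub>m n) Kr * kron (complex_of_real (1/q) \<cdot>\<^sub>m 1\<^sub>m n) (minv Kr) =
    kron ((complex_of_real q \<cdot>\<^sub>m 1\<^sub>m n) * (complex_of_real (1/q) \<cdot>\<^sub>m 1\<^sub>m n)) (Kr * minv Kr)"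
    by (rule kron_mult_kron[OF smult_carrier_mat[OF one_carrier_mat] Krc smult_carrier_mat[OF one_carrier_mat] mi(3)])
  also have "\<dots> = 1\<^sub>m (n*N)" using qq mi(1) kron_one by simp
  finally show ?thesis
    by (intro minv_right_inverse_unique(1)[where n="n*N"]) (use Krc mi(3) in auto)
qed

text \<open>Since S = S' Q^H, the training matrix factors through the isometry Q^T, which leaves white
  temporal noise q I invariant.\<close>
lemma lmmse_err_reduced_training:
  assumes Ct: "Ct \<in> carrier_mat M M" and Cr: "Cr \<in> carrier_mat N N" and Kr: "hpd N Kr" and q: "q > 0"
    and S: "S \<in> carrier_mat M L" and Q: "Q \<in> carrier_mat L r" and QQ: "mat_adjoint Q * Q = 1\<^sub>m r"
    and SQQ: "S * Q * mat_adjoint Q = S"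
  shows "lmmse_err (S * Q) Ct Cr (complex_of_real q \<cdot>\<^sub>m 1\<^sub>m r) Kr = lmmse_err S Ct Cr (complex_of_real q \<cdot>\<^sub>m 1\<^sub>m L) Kr"
proof -
  define S' where "S' = S * Q"
  have S'c: "S' \<in> carrier_mat M r" unfolding S'_def using S Q by simp
  have aQ: "mat_adjoint Q \<in> carrier_mat r L" using Q by simp
  define Qc where "Qc = transpose_mat (mat_adjoint Q)"
  have Qcc: "Qc \<in> carrier_mat L r" unfolding Qc_def using aQ by simp
  have "mat_adjoint Qc * Qc = transpose_mat (mat_adjoint Q * Q)"
    unfolding Qc_def mat_adjoint_transpose using transpose_mult[OF aQ Q] by simp
  then have QcQc: "mat_adjoint Qc * Qc = 1\<^sub>m r" using QQ by simp
  define A' where "A' = transpose_mat S' * Ct"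
  have A'c: "A' \<in> carrier_mat r M" unfolding A'_def using S'c Ct by simp
  have "transpose_mat S = Qc * transpose_mat S'"
    unfolding Qc_def S'_def using transpose_mult[OF S'c[unfolded S'_def] aQ] SQQ by simp
  then have "transpose_mat S * Ct = Qc * A'"
    unfolding A'_def using assoc_mult_mat[OF Qcc _ Ct] S'c by simp
  define G where "G = kron Qc (1\<^sub>m N)"
  have Gc: "G \<in> carrier_mat (L*N) (r*N)" unfolding G_def using Qcc by simp
  define F' where "F' = kron A' Cr"
  have F'c: "F' \<in> carrier_mat (r*N) (M*N)" unfolding F'_def using A'c Cr by simp
  have Fopt: "kron (transpose_mat S * Ct) Cr = G * F'"
    unfolding \<open>transpose_mat S * Ct = Qc * A'\<close> G_def F'_def
    using kron_mult_kron[OF Qcc one_carrier_mat A'c Cr] left_mult_one_mat[OF Cr] by simp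
  have Krc: "Kr \<in> carrier_mat N N" using hpd_hermitian[OF Kr] by simp
  note mi = minv_inverse[OF Krc pos_def_det_neq_zero[OF hpd_pos_def[OF Kr]]]
  define KiL where "KiL = kron (complex_of_real (1/q) \<cdot>\<^sub>m 1\<^sub>m L) (minv Kr)"
  have KiLc: "KiL \<in> carrier_mat (L*N) (L*N)" unfolding KiL_def using mi(3) by simp
  have GKG: "mat_adjoint G * KiL * G = kron (complex_of_real (1/q) \<cdot>\<^sub>m 1\<^sub>m r) (minv Kr)"
    unfolding G_def KiL_def by (rule kron_isometry_sandwich_scalar[OF Qcc QcQc mi(3)])
  have XL: "mat_adjoint (G * F') * KiL * (G * F') = mat_adjoint F' * (mat_adjoint G * KiL * G) * F'"
    unfolding mat_adjoint_mult[OF Gc F'c]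
    by (rule assoc_mult_mat5[OF mat_adjoint_carrier[OF F'c] mat_adjoint_carrier[OF Gc] KiLc Gc F'c])
  have dim: "dim_col (G * F') = M*N" "dim_col F' = M*N" using Gc F'c by auto
  have q0: "q \<noteq> 0" using q by simp
  show ?thesis
    unfolding lmmse_err_unfold Fopt minv_kron_scalar_one[OF Kr q0] KiL_def[symmetric] XL GKG dim
      S'_def[symmetric] A'_def[symmetric] F'_def[symmetric] ..
qed

lemma lmmse_err_training_length_reduction:
  assumes Ct: "Ct \<in> carrier_mat M M" and Cr1: "Cr1 \<in> carrier_mat N1 N1" and Cr2: "Cr2 \<in> carrier_mat N2 N2"
    and Kr: "hpd N1 Kr1" "hpd N2 Kr2"
    and q: "q1 > 0" "q2 > 0" and S: "S \<in> carrier_mat M L" and r: "vec_space.rank M S = r"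
  shows "\<exists>S' \<in> carrier_mat M r.
               mtrace (S' * mat_adjoint S') = mtrace (S * mat_adjoint S)
             \<and> lmmse_err S' Ct Cr1 (complex_of_real q1 \<cdot>\<^sub>m 1\<^sub>m r) Kr1
               + lmmse_err S' Ct Cr2 (complex_of_real q2 \<cdot>\<^sub>m 1\<^sub>m r) Kr2
               = lmmse_err S Ct Cr1 (complex_of_real q1 \<cdot>\<^sub>m 1\<^sub>m L) Kr1 + lmmse_err S Ct Cr2 (complex_of_real q2 \<cdot>\<^sub>m 1\<^sub>m L) Kr2"
proof -
  obtain Q where Q: "Q \<in> carrier_mat L r" and QQ: "mat_adjoint Q * Q = 1\<^sub>m r" and SQQ: "S * Q * mat_adjoint Q = S"
    using orthonormal_row_space_basis[OF S] r by blast
  have aQ: "mat_adjoint Q \<in> carrier_mat r L" using Q by simp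
  have aS: "mat_adjoint S \<in> carrier_mat L M" using S by simp
  have S'c: "S * Q \<in> carrier_mat M r" using S Q by simp
  have "S * Q * mat_adjoint (S * Q) = S * Q * (mat_adjoint Q * mat_adjoint S)"
    using mat_adjoint_mult[OF S Q] by simp
  also have "\<dots> = (S * Q * mat_adjoint Q) * mat_adjoint S"
    using assoc_mult_mat[OF S'c aQ aS] by simp
  finally have tr: "S * Q * mat_adjoint (S * Q) = S * mat_adjoint S" using SQQ by simp
  show ?thesis
    using tr lmmse_err_reduced_training[OF Ct Cr1 Kr(1) q(1) S Q QQ SQQ] lmmse_err_reduced_training[OF Ct Cr2 Kr(2) q(2) S Q QQ SQQ]
    by (intro bexI[OF _ S'c]) simp
qed

theorem lemma3:
  fixes M N1 N2 L :: nat
    and Ct Cr1 Cr2 Zt Zr1 Zr2 Kq1 Kq2 Kr1 Kr2 :: "complex mat"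
  assumes dims: "M \<ge> 1" "N1 \<ge> 1" "N2 \<ge> 1" "L \<ge> 1"
    and Ct: "Ct \<in> carrier_mat M M" "invertible_mat Ct"
    and Cr1: "Cr1 \<in> carrier_mat N1 N1" "invertible_mat Cr1"
    and Cr2: "Cr2 \<in> carrier_mat N2 N2" "invertible_mat Cr2"
    and Zt: "Zt = Ct * mat_adjoint Ct" "hpd M Zt"
    and Zr1: "Zr1 = Cr1 * mat_adjoint Cr1" "hpd N1 Zr1"
    and Zr2: "Zr2 = Cr2 * mat_adjoint Cr2" "hpd N2 Zr2"
    and Kq: "hpd L Kq1" "hpd L Kq2"
    and Kr: "hpd N1 Kr1" "hpd N2 Kr2"
    and shared: "share_eigvecs N1 Kr1 Zr1" "share_eigvecs N2 Kr2 Zr2"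
  shows
    "(L \<ge> M \<longrightarrow>
        (\<forall>\<epsilon>::real. \<epsilon> > 0 \<longrightarrow>
           (\<exists>S \<in> carrier_mat M L.
              lmmse_err S Ct Cr1 Kq1 Kr1 + lmmse_err S Ct Cr2 Kq2 Kr2 < \<epsilon>)))
   \<and> (L < M \<longrightarrow>
        (\<forall>\<sigma>t \<sigma>r1 \<sigma>r2.
           eigenvalue_list M Zt \<sigma>t \<and> (\<forall>i j. i \<le> j \<and> j < M \<longrightarrow> \<sigma>t j \<le> \<sigma>t i)
           \<and> eigenvalue_list N1 Zr1 \<sigma>r1 \<and> eigenvalue_list N2 Zr2 \<sigma>r2 \<longrightarrow>
           (\<forall>S \<in> carrier_mat M L.
              lmmse_err S Ct Cr1 Kq1 Kr1 + lmmse_err S Ct Cr2 Kq2 Kr2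
              \<ge> (\<Sum>m\<in>{L..<M}. \<sigma>t m) * ((\<Sum>n<N1. \<sigma>r1 n) + (\<Sum>n<N2. \<sigma>r2 n)))))
   \<and> (\<forall>(q1::real) (q2::real) (\<tau>::real) Sopt r.
        q1 > 0 \<and> q2 > 0 \<and> \<tau> > 0
        \<and> Kq1 = complex_of_real q1 \<cdot>\<^sub>m 1\<^sub>m L \<and> Kq2 = complex_of_real q2 \<cdot>\<^sub>m 1\<^sub>m L
        \<and> Sopt \<in> carrier_mat M L \<and> Re (mtrace (Sopt * mat_adjoint Sopt)) \<le> \<tau>
        \<and> (\<forall>S \<in> carrier_mat M L. Re (mtrace (S * mat_adjoint S)) \<le> \<tau> \<longrightarrow>
              lmmse_err Sopt Ct Cr1 Kq1 Kr1 + lmmse_err Sopt Ct Cr2 Kq2 Kr2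
              \<le> lmmse_err S Ct Cr1 Kq1 Kr1 + lmmse_err S Ct Cr2 Kq2 Kr2)
        \<and> vec_space.rank M Sopt = r
        \<longrightarrow> (\<exists>S' \<in> carrier_mat M r.
               mtrace (S' * mat_adjoint S') = mtrace (Sopt * mat_adjoint Sopt)
             \<and> lmmse_err S' Ct Cr1 (complex_of_real q1 \<cdot>\<^sub>m 1\<^sub>m r) Kr1
               + lmmse_err S' Ct Cr2 (complex_of_real q2 \<cdot>\<^sub>m 1\<^sub>m r) Kr2
               = lmmse_err Sopt Ct Cr1 Kq1 Kr1 + lmmse_err Sopt Ct Cr2 Kq2 Kr2))"
proof (intro conjI, goal_cases)
  case 1
  show ?case using lmmse_err_sum_arbitrarily_small[OF Ct Cr1 Cr2 Kq Kr] by blast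
next
  case 2
  show ?case
  proof (intro impI allI ballI)
    fix \<sigma>t \<sigma>r1 \<sigma>r2 and S :: "complex mat"
    assume LM: "L < M" and ev: "eigenvalue_list M Zt \<sigma>t \<and> (\<forall>i j. i \<le> j \<and> j < M \<longrightarrow> \<sigma>t j \<le> \<sigma>t i)
      \<and> eigenvalue_list N1 Zr1 \<sigma>r1 \<and> eigenvalue_list N2 Zr2 \<sigma>r2" and S: "S \<in> carrier_mat M L"
    have "(\<Sum>m\<in>{L..<M}. \<sigma>t m) * (\<Sum>n<N1. \<sigma>r1 n) \<le> lmmse_err S Ct Cr1 Kq1 Kr1"
      using lmmse_err_lower_bound[OF Ct Cr1(1) S Kq(1) Kr(1) LM] ev Zt(1) Zr1(1) by blast
    moreover have "(\<Sum>m\<in>{L..<M}. \<sigma>t m) * (\<Sum>n<N2. \<sigma>r2 n) \<le> lmmse_err S Ct Cr2 Kq2 Kr2"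
      using lmmse_err_lower_bound[OF Ct Cr2(1) S Kq(2) Kr(2) LM] ev Zt(1) Zr2(1) by blast
    ultimately show "(\<Sum>m\<in>{L..<M}. \<sigma>t m) * ((\<Sum>n<N1. \<sigma>r1 n) + (\<Sum>n<N2. \<sigma>r2 n))
        \<le> lmmse_err S Ct Cr1 Kq1 Kr1 + lmmse_err S Ct Cr2 Kq2 Kr2"
      by (simp add: distrib_left)
  qed
next
  case 3
  show ?case using lmmse_err_training_length_reduction[OF Ct(1) Cr1(1) Cr2(1) Kr] by blast
qed

end
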